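(* Let ${}_{\mathfrak Y}\mathfrak B_{\mathfrak X}$ be a left-fibrant graph of bisets, and let $\dagger$ be a vertex of $\mathfrak Y$ and $*$ a vertex of $\mathfrak X$. Then the natural map \[\bigsqcup_{z\in\rho^{-1}( * )}\pi_1(\mathfrak Y,\dagger,\lambda(z))\otimes_{G_{\lambda(z)}}B_z\longrightarrow\pi_1(\mathfrak B,\dagger,* ),\qquad q\otimes b\mapsto q\otimes b\otimes 1,\] is a bijection (an isomorphism of left $\pi_1(\mathfrak Y,\dagger)$-sets); thus $\pi_1(\mathfrak B,\dagger,* )$ is described by the left-hand side, with the right action of $\pi_1(\mathfrak X,* )$ given by lifting of paths.
   Context: Graphs and graphs of groups. A graph is a set $\mathfrak X=V\sqcup E$ with maps $x\mapsto x^-$, $x\mapsto\bar x$ such that $\bar{\bar x}=x$, $x^-\in V$, and $x=x^-\iff x=\bar x\iff x\in V$; set $x^+=(\bar x)^-$. A graph morphism commutes with $\bar{\ }$ and $^-$ (it may send edges to vertices); it is simplicial if it sends edges to edges. A graph of groups is a connected graph with a group $G_x$ for each $x$ and homomorphisms $g\mapsto g^-\colon G_x\to G_{x^-}$, $g\mapsto\bar g\colon G_x\to G_{\bar x}$, such that $G_x\to G_{\bar x}\to G_x$ is the identity and both maps are the identity when $x\in V$; $g^+=(\bar g)^-$. Its fundamental groupoid $\pi_1(\mathfrak X)$ has object set $V$ and is generated by the $x\in\mathfrak X$ (morphisms from $x^-$ to $x^+$) and the elements of the $G_v$, subject to the relations of the $G_v$, $v=1\in G_v$, $x\bar x=1$,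 $g^-x=xg^+$ ($g\in G_x$). $\pi_1(\mathfrak X,v,w)$ is the set of morphisms from $v$ to $w$; $\pi_1(\mathfrak X,v)=\pi_1(\mathfrak X,v,v)$. Graphs of bisets. A congruence of bisets with respect to homomorphisms $\psi,\phi$ is a map $\beta$ with $(hbg)^\beta=h^\psi b^\beta g^\phi$. For graphs of groups $\mathfrak Y,\mathfrak X$, a $\mathfrak Y$-$\mathfrak X$ graph of bisets is a (not necessarily connected) graph $\mathfrak B$ with graph morphisms $\lambda\colon\mathfrak B\to\mathfrak Y$, $\rho\colon\mathfrak B\to\mathfrak X$, a $G_{\lambda(z)}$-$G_{\rho(z)}$-biset $B_z$ for each $z$, and maps $b\mapsto b^-\colon B_z\to B_{z^-}$, $b\mapsto\bar b\colon B_z\to B_{\bar z}$ that are congruences w.r.t. the corresponding group homomorphisms, with $B_z\to B_{\bar z}\to B_z$ the identity and both maps the identity for vertices; $b^+=(\bar b)^-$. The fundamental biset $\pi_1(\mathfrak B,\dagger,* )$ is the $\pi_1(\mathfrak Y,\dagger)$-$\pi_1(\mathfrak X,* )$-biset $\bigsqcup_{z\in V(\mathfrak B)}\pi_1(\mathfrak Y,\dagger,\lambda(z))\otimes_{G_{\lambda(z)}}B_z\otimes_{G_{\rho(z)}}\pi_1(\mathfrak X,\rho(z),* )$ modulo $q\otimes b^-\otimes p=q\lambda(z)\otimes b^+\otimes\overline{\rho(z)}p$ for edges $z\in\mathfrak B$, $b\in B_z$, $q\in\pi_1(\mathfrak Y,\dagger,\lambda(z)^-)$, $p\in\pi_1(\mathfrak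 X,\rho(z)^-,* )$ ($\lambda(z),\overline{\rho(z)}$ read as groupoid morphisms, trivial if vertices). Left-fibrant: $\rho$ is simplicial, and for every vertex $v\in\mathfrak B$ and every edge $f\in\mathfrak X$ with $f^-=\rho(v)$ the map $\bigsqcup_{e\in\rho^{-1}(f),\,e^-=v}G_{\lambda(v)}\otimes_{G_{\lambda(e)}}B_e\to B_v$, $g\otimes b\mapsto gb^-$, is an isomorphism of $G_{\lambda(v)}$-$G_f$-bisets ($G_{\lambda(e)}$ acting on $G_{\lambda(v)}$ through $G_{\lambda(e)}\to G_{\lambda(e)^-}=G_{\lambda(v)}$, and $G_f$ acting on $B_v$ through $G_f\to G_{\rho(v)}$). *)

theory Defs
  imports "HOL-Algebra.Group"
begin

section \<open>Graphs (Serre style)\<close>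

text \<open>A graph is a set V \<union> E (vertices and edges, disjoint) with an involution
  grev (x \<mapsto> x bar) and an origin map gorg (x \<mapsto> x^-).\<close>

record 'v dgraph =
  gverts :: "'v set"
  gedges :: "'v set"
  grev   :: "'v \<Rightarrow> 'v"
  gorg   :: "'v \<Rightarrow> 'v"

definition carr :: "('v,'a) dgraph_scheme \<Rightarrow> 'v set" where
  "carr G = gverts G \<union> gedges G"

definition tgt :: "('v,'a) dgraph_scheme \<Rightarrow> 'v \<Rightarrow> 'v" where
  "tgt G x = gorg G (grev G x)"

definition is_graph :: "('v,'a) dgraph_scheme \<Rightarrow> bool" where
  "is_graph G \<longleftrightarrow> gverts G \<inter> gedges G = {} \<and>
     (\<forall>x\<in>carr G. grev G x \<in> carr G \<and> grev G (grev G x) = x \<and> gorg G x \<in> gverts G \<and>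
        (x \<in> gverts G \<longleftrightarrow> grev G x = x) \<and> (x \<in> gverts G \<longleftrightarrow> gorg G x = x))"

definition connected_graph :: "('v,'a) dgraph_scheme \<Rightarrow> bool" where
  "connected_graph G \<longleftrightarrow> gverts G \<noteq> {} \<and>
     (\<forall>v\<in>gverts G. \<forall>w\<in>gverts G. (v, w) \<in> {(gorg G e, tgt G e) | e. e \<in> gedges G}\<^sup>*)"

definition graph_mor :: "('u,'a) dgraph_scheme \<Rightarrow> ('v,'b) dgraph_scheme \<Rightarrow> ('u \<Rightarrow> 'v) \<Rightarrow> bool" where
  "graph_mor B Y f \<longleftrightarrow> (\<forall>z\<in>carr B. f z \<in> carr Y \<and> f (grev B z) = grev Y (f z) \<and>
                                       f (gorg B z) = gorg Y (f z))"

text \<open>grp G x is the group G_x; hm G x is g \<mapsto> g^- : G_x \<rightarrow> G_{x^-};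
  hb G x is g \<mapsto> g bar : G_x \<rightarrow> G_{x bar}.\<close>

record ('v,'g) gog = "'v dgraph" +
  grp :: "'v \<Rightarrow> 'g monoid"
  hm  :: "'v \<Rightarrow> 'g \<Rightarrow> 'g"
  hb  :: "'v \<Rightarrow> 'g \<Rightarrow> 'g"

definition is_gog :: "('v,'g) gog \<Rightarrow> bool" where
  "is_gog G \<longleftrightarrow> is_graph G \<and> connected_graph G \<and>
     (\<forall>x\<in>carr G. group (grp G x) \<and>
        hm G x \<in> hom (grp G x) (grp G (gorg G x)) \<and>
        hb G x \<in> hom (grp G x) (grp G (grev G x)) \<and>
        (\<forall>g\<in>carrier (grp G x). hb G (grev G x) (hb G x g) = g)) \<and>
     (\<forall>v\<in>gverts G. \<forall>g\<in>carrier (grp G v). hm G v g = g \<and> hb G v g = g)"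

section \<open>Fundamental groupoid, presented by words\<close>

text \<open>Letters: LE x for an edge x (a morphism x^- \<rightarrow> x^+), LG v g for g \<in> G_v.
  The generators x \<in> V are omitted, since the relation v = 1 \<in> G_v identifies
  them with the identity (here: the relation LG v 1 = empty word).\<close>

datatype ('v,'g) letter = LE 'v | LG 'v 'g

inductive wpath :: "('v,'g) gog \<Rightarrow> 'v \<Rightarrow> 'v \<Rightarrow> ('v,'g) letter list \<Rightarrow> bool"
  for G :: "('v,'g) gog" where
  wnil: "v \<in> gverts G \<Longrightarrow> wpath G v v []"
| wedge: "x \<in> gedges G \<Longrightarrow> wpath G (tgt G x) w p \<Longrightarrow> wpath G (gorg G x) w (LE x # p)"
| welt: "v \<in> gverts G \<Longrightarrow> g \<in> carrier (grp G v) \<Longrightarrow> wpath G v w p \<Longrightarrow> wpath G v w (LG v g # p)"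

text \<open>peq G v w p q: the words p, q (paths from v to w) represent the same
  morphism of the fundamental groupoid \<pi>_1(G, v, w).\<close>

inductive peq :: "('v,'g) gog \<Rightarrow> 'v \<Rightarrow> 'v \<Rightarrow> ('v,'g) letter list \<Rightarrow> ('v,'g) letter list \<Rightarrow> bool"
  for G :: "('v,'g) gog" where
  prefl: "wpath G v w p \<Longrightarrow> peq G v w p p"
| psym: "peq G v w p q \<Longrightarrow> peq G v w q p"
| ptrans: "peq G v w p q \<Longrightarrow> peq G v w q r \<Longrightarrow> peq G v w p r"
| pctx: "peq G a b l r \<Longrightarrow> wpath G v a u \<Longrightarrow> wpath G b w s \<Longrightarrow> peq G v w (u @ l @ s) (u @ r @ s)"
| pmult: "v \<in> gverts G \<Longrightarrow> g \<in> carrier (grp G v) \<Longrightarrow> h \<in> carrier (grp G v) \<Longrightarrow>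
          peq G v v [LG v g, LG v h] [LG v (g \<otimes>\<^bsub>grp G v\<^esub> h)]"
| pone: "v \<in> gverts G \<Longrightarrow> peq G v v [LG v \<one>\<^bsub>grp G v\<^esub>] []"
| pinv: "x \<in> gedges G \<Longrightarrow> peq G (gorg G x) (gorg G x) [LE x, LE (grev G x)] []"
| pconj: "x \<in> gedges G \<Longrightarrow> g \<in> carrier (grp G x) \<Longrightarrow>
          peq G (gorg G x) (tgt G x) [LG (gorg G x) (hm G x g), LE x]
                                     [LE x, LG (tgt G x) (hm G (grev G x) (hb G x g))]"

definition mor :: "('v,'g) gog \<Rightarrow> 'v \<Rightarrow> ('v,'g) letter list" where
  "mor G x = (if x \<in> gedges G then [LE x] else [])"

inductive_set eqc :: "'a set \<Rightarrow> ('a \<times> 'a) set \<Rightarrow> ('a \<times> 'a) set" for A R where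
  eqc_base: "(x, y) \<in> R \<Longrightarrow> x \<in> A \<Longrightarrow> y \<in> A \<Longrightarrow> (x, y) \<in> eqc A R"
| eqc_refl: "x \<in> A \<Longrightarrow> (x, x) \<in> eqc A R"
| eqc_sym: "(x, y) \<in> eqc A R \<Longrightarrow> (y, x) \<in> eqc A R"
| eqc_trans: "(x, y) \<in> eqc A R \<Longrightarrow> (y, z) \<in> eqc A R \<Longrightarrow> (x, z) \<in> eqc A R"

text \<open>lam, rho: the graph morphisms to Y and X; bs z = B_z; lact z g b = g b
  (g \<in> G_{lam z}); ract z b h = b h (h \<in> G_{rho z}); bm z b = b^-; bb z b = b bar.\<close>

record ('z,'y,'x,'g,'h,'b) gobs = "'z dgraph" +
  lam  :: "'z \<Rightarrow> 'y"
  rho  :: "'z \<Rightarrow> 'x"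
  bs   :: "'z \<Rightarrow> 'b set"
  lact :: "'z \<Rightarrow> 'g \<Rightarrow> 'b \<Rightarrow> 'b"
  ract :: "'z \<Rightarrow> 'b \<Rightarrow> 'h \<Rightarrow> 'b"
  bm   :: "'z \<Rightarrow> 'b \<Rightarrow> 'b"
  bb   :: "'z \<Rightarrow> 'b \<Rightarrow> 'b"

definition is_biset :: "'g monoid \<Rightarrow> 'h monoid \<Rightarrow> 'b set \<Rightarrow> ('g \<Rightarrow> 'b \<Rightarrow> 'b) \<Rightarrow> ('b \<Rightarrow> 'h \<Rightarrow> 'b) \<Rightarrow> bool" where
  "is_biset GL GR S l r \<longleftrightarrow>
     (\<forall>g\<in>carrier GL. \<forall>b\<in>S. l g b \<in> S) \<and> (\<forall>h\<in>carrier GR. \<forall>b\<in>S. r b h \<in> S) \<and>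
     (\<forall>b\<in>S. l \<one>\<^bsub>GL\<^esub> b = b \<and> r b \<one>\<^bsub>GR\<^esub> = b) \<and>
     (\<forall>g\<in>carrier GL. \<forall>g'\<in>carrier GL. \<forall>b\<in>S. l (g \<otimes>\<^bsub>GL\<^esub> g') b = l g (l g' b)) \<and>
     (\<forall>h\<in>carrier GR. \<forall>h'\<in>carrier GR. \<forall>b\<in>S. r b (h \<otimes>\<^bsub>GR\<^esub> h') = r (r b h) h') \<and>
     (\<forall>g\<in>carrier GL. \<forall>h\<in>carrier GR. \<forall>b\<in>S. l g (r b h) = r (l g b) h)"

definition is_gobs :: "('y,'g) gog \<Rightarrow> ('x,'h) gog \<Rightarrow> ('z,'y,'x,'g,'h,'b) gobs \<Rightarrow> bool" where
  "is_gobs Y X B \<longleftrightarrow> is_graph B \<and> graph_mor B Y (lam B) \<and> graph_mor B X (rho B) \<and>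
     (\<forall>z\<in>carr B.
        is_biset (grp Y (lam B z)) (grp X (rho B z)) (bs B z) (lact B z) (ract B z) \<and>
        (\<forall>b\<in>bs B z. bm B z b \<in> bs B (gorg B z) \<and>
           (\<forall>g\<in>carrier (grp Y (lam B z)). \<forall>h\<in>carrier (grp X (rho B z)).
              bm B z (lact B z g (ract B z b h)) =
              lact B (gorg B z) (hm Y (lam B z) g) (ract B (gorg B z) (bm B z b) (hm X (rho B z) h)))) \<and>
        (\<forall>b\<in>bs B z. bb B z b \<in> bs B (grev B z) \<and>
           (\<forall>g\<in>carrier (grp Y (lam B z)). \<forall>h\<in>carrier (grp X (rho B z)).
              bb B z (lact B z g (ract B z b h)) =
              lact B (grev B z) (hb Y (lam B z) g) (ract B (grev B z) (bb B z b) (hb X (rho B z) h)))) \<and>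
        (\<forall>b\<in>bs B z. bb B (grev B z) (bb B z b) = b)) \<and>
     (\<forall>v\<in>gverts B. \<forall>b\<in>bs B v. bm B v b = b \<and> bb B v b = b)"

text \<open>Domain and relation of the disjoint union over e \<in> rho^-1(f), e^- = v, of
  G_{lam v} \<otimes>_{G_{lam e}} B_e.\<close>

definition fib_dom :: "('y,'g) gog \<Rightarrow> ('z,'y,'x,'g,'h,'b) gobs \<Rightarrow> 'z \<Rightarrow> 'x \<Rightarrow> ('z \<times> 'g \<times> 'b) set" where
  "fib_dom Y B v f = {(e, g, b). e \<in> gedges B \<and> rho B e = f \<and> gorg B e = v \<and>
                                  g \<in> carrier (grp Y (lam B v)) \<and> b \<in> bs B e}"

definition fib_rel :: "('y,'g) gog \<Rightarrow> ('z,'y,'x,'g,'h,'b) gobs \<Rightarrow> 'z \<Rightarrow> 'x \<Rightarrow> (('z \<times> 'g \<times> 'b) \<times> ('z \<times> 'g \<times> 'b)) set" where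
  "fib_rel Y B v f = eqc (fib_dom Y B v f)
     {((e, g \<otimes>\<^bsub>grp Y (lam B v)\<^esub> hm Y (lam B e) k, b), (e, g, lact B e k b)) | e g b k.
        k \<in> carrier (grp Y (lam B e))}"

definition left_fibrant :: "('y,'g) gog \<Rightarrow> ('x,'h) gog \<Rightarrow> ('z,'y,'x,'g,'h,'b) gobs \<Rightarrow> bool" where
  "left_fibrant Y X B \<longleftrightarrow>
     (\<forall>z\<in>gedges B. rho B z \<in> gedges X) \<and>
     (\<forall>v\<in>gverts B. \<forall>f\<in>gedges X. gorg X f = rho B v \<longrightarrow>
        bij_betw (\<lambda>C. the_elem ((\<lambda>(e, g, b). lact B v g (bm B e b)) ` C))
                 (fib_dom Y B v f // fib_rel Y B v f) (bs B v))"

text \<open>Representatives (z, q, b, p) of q \<otimes> b \<otimes> p in \<pi>_1(B, dag, st).\<close>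

definition bis_dom :: "('y,'g) gog \<Rightarrow> ('x,'h) gog \<Rightarrow> ('z,'y,'x,'g,'h,'b) gobs \<Rightarrow> 'y \<Rightarrow> 'x \<Rightarrow>
    ('z \<times> ('y,'g) letter list \<times> 'b \<times> ('x,'h) letter list) set" where
  "bis_dom Y X B dag st = {(z, q, b, p). z \<in> gverts B \<and> wpath Y dag (lam B z) q \<and> b \<in> bs B z \<and>
                                         wpath X (rho B z) st p}"

definition bis_rel :: "('y,'g) gog \<Rightarrow> ('x,'h) gog \<Rightarrow> ('z,'y,'x,'g,'h,'b) gobs \<Rightarrow> 'y \<Rightarrow> 'x \<Rightarrow>
    (('z \<times> ('y,'g) letter list \<times> 'b \<times> ('x,'h) letter list) \<times>
     ('z \<times> ('y,'g) letter list \<times> 'b \<times> ('x,'h) letter list)) set" where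
  "bis_rel Y X B dag st = eqc (bis_dom Y X B dag st)
     ({((z, q, b, p), (z, q', b, p)) | z q q' b p. peq Y dag (lam B z) q q'} \<union>
      {((z, q, b, p), (z, q, b, p')) | z q b p p'. peq X (rho B z) st p p'} \<union>
      {((z, q @ [LG (lam B z) g], b, p), (z, q, lact B z g b, p)) | z q g b p.
          g \<in> carrier (grp Y (lam B z))} \<union>
      {((z, q, ract B z b h, p), (z, q, b, LG (rho B z) h # p)) | z q b h p.
          h \<in> carrier (grp X (rho B z))} \<union>
      {((gorg B z, q, bm B z b, p),
        (tgt B z, q @ mor Y (lam B z), bm B (grev B z) (bb B z b), mor X (grev X (rho B z)) @ p))
         | z q b p. z \<in> gedges B \<and> b \<in> bs B z \<and>
             wpath Y dag (gorg Y (lam B z)) q \<and> wpath X (gorg X (rho B z)) st p})"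

definition pi1B where
  "pi1B Y X B dag st = bis_dom Y X B dag st // bis_rel Y X B dag st"

text \<open>Representatives (z, q, b) of q \<otimes> b in the disjoint union over z \<in> rho^-1(st)
  of \<pi>_1(Y, dag, lam z) \<otimes>_{G_{lam z}} B_z.\<close>

definition lhs_dom :: "('y,'g) gog \<Rightarrow> ('x,'h) gog \<Rightarrow> ('z,'y,'x,'g,'h,'b) gobs \<Rightarrow> 'y \<Rightarrow> 'x \<Rightarrow>
    ('z \<times> ('y,'g) letter list \<times> 'b) set" where
  "lhs_dom Y X B dag st = {(z, q, b). z \<in> gverts B \<and> rho B z = st \<and> wpath Y dag (lam B z) q \<and> b \<in> bs B z}"

definition lhs_rel :: "('y,'g) gog \<Rightarrow> ('x,'h) gog \<Rightarrow> ('z,'y,'x,'g,'h,'b) gobs \<Rightarrow> 'y \<Rightarrow> 'x \<Rightarrow>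
    (('z \<times> ('y,'g) letter list \<times> 'b) \<times> ('z \<times> ('y,'g) letter list \<times> 'b)) set" where
  "lhs_rel Y X B dag st = eqc (lhs_dom Y X B dag st)
     ({((z, q, b), (z, q', b)) | z q q' b. peq Y dag (lam B z) q q'} \<union>
      {((z, q @ [LG (lam B z) g], b), (z, q, lact B z g b)) | z q g b.
          g \<in> carrier (grp Y (lam B z))})"

definition lhs_set where
  "lhs_set Y X B dag st = lhs_dom Y X B dag st // lhs_rel Y X B dag st"

definition natmap where
  "natmap Y X B dag st C = bis_rel Y X B dag st `` ((\<lambda>(z, q, b). (z, q, b, [])) ` C)"

text \<open>Left actions of \<pi>_1(Y, dag) (represented by a loop word r) on classes.\<close>
definition lhs_act where
  "lhs_act Y X B dag st r C = lhs_rel Y X B dag st `` ((\<lambda>(z, q, b). (z, r @ q, b)) ` C)"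

definition bis_act where
  "bis_act Y X B dag st r C = bis_rel Y X B dag st `` ((\<lambda>(z, q, b, p). (z, r @ q, b, p)) ` C)"

end

(*
  The inverse of the natural map lifts paths of X. Given a representative q \<otimes> b \<otimes> p of
  \<pi>_1(B, \<dagger>, \<star>), walk along p starting from b: an element h of a vertex group acts on b from the
  right, and at an edge f left-fibrancy writes b = g e^-(c) for an edge e over f, which is then
  crossed, turning q \<otimes> b into q g \<lambda>(e) \<otimes> (c bar)^- at e^+. At the end of p one has a
  representative of the left-hand side over \<star>. The fibrancy isomorphism makes this lift
  independent of the choices and compatible with all defining relations of \<pi>_1(X) and of the
  left-hand side, so it descends to classes; it is inverse to the natural map because every
  representative is related in \<pi>_1(B) to its own lift, step by step along p. Equivariance is
  clear, since \<pi>_1(Y, \<dagger>) acts on both sides by prefixing the Y-word.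
*)

theory Submission
  imports Defs
begin

section \<open>Generated equivalence relations\<close>

lemma eqc_field: "(x, y) \<in> eqc A R \<Longrightarrow> x \<in> A \<and> y \<in> A"
  by (induction rule: eqc.induct) auto

lemma equiv_eqc: "equiv A (eqc A R)"
proof (rule equivI)
  show "eqc A R \<subseteq> A \<times> A" by (auto dest: eqc_field)
  show "refl_on A (eqc A R)" unfolding refl_on_def by (auto intro: eqc.eqc_refl)
  show "sym (eqc A R)" unfolding sym_def by (auto intro: eqc.eqc_sym)
  show "trans (eqc A R)" unfolding trans_def by (blast intro: eqc.eqc_trans)
qed

lemma eqc_map:
  assumes "(x, y) \<in> eqc A R" and "\<And>a. a \<in> A \<Longrightarrow> f a \<in> A'"
    and "\<And>a b. (a, b) \<in> R \<Longrightarrow> a \<in> A \<Longrightarrow> b \<in> A \<Longrightarrow> (f a, f b) \<in> eqc A' R'"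
  shows "(f x, f y) \<in> eqc A' R'"
  using assms(1)
proof induction
  case (eqc_base x y)
  then show ?case by (rule assms(3))
next
  case (eqc_refl x)
  then show ?case by (intro eqc.eqc_refl assms(2))
next
  case (eqc_sym x y)
  from eqc_sym.IH show ?case by (rule eqc.eqc_sym)
next
  case (eqc_trans x y z)
  from eqc_trans.IH show ?case by (rule eqc.eqc_trans)
qed

lemma eqc_invariant:
  assumes "(x, y) \<in> eqc A R" and "\<And>a b. (a, b) \<in> R \<Longrightarrow> a \<in> A \<Longrightarrow> b \<in> A \<Longrightarrow> F a = F b"
  shows "F x = F y"
  using assms(1) by induction (simp_all add: assms(2))

lemma Image_image_equiv_class:
  assumes "equiv A R" and "trans R'" and "x \<in> A" and "\<And>a b. (a, b) \<in> R \<Longrightarrow> (f a, f b) \<in> R'"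
  shows "R' `` (f ` (R `` {x})) = R' `` {f x}"
proof
  show "R' `` (f ` (R `` {x})) \<subseteq> R' `` {f x}"
    using assms(2,4) unfolding trans_def by blast
  have "x \<in> R `` {x}" using assms(1,3) by (rule equiv_class_self)
  then show "R' `` {f x} \<subseteq> R' `` (f ` (R `` {x}))" by blast
qed

section \<open>Graphs, graphs of groups and their path groupoids\<close>

lemma vert_carr: "v \<in> gverts G \<Longrightarrow> v \<in> carr G"
  unfolding carr_def by blast

lemma edge_carr: "x \<in> gedges G \<Longrightarrow> x \<in> carr G"
  unfolding carr_def by blast

lemma is_graphD:
  assumes "is_graph G" and "x \<in> carr G"
  shows "grev G x \<in> carr G" and "grev G (grev G x) = x" and "gorg G x \<in> gverts G"
    and "x \<in> gverts G \<longleftrightarrow> grev G x = x" and "x \<in> gverts G \<longleftrightarrow> gorg G x = x"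
  using bspec[OF conjunct2[OF assms(1)[unfolded is_graph_def]] assms(2)] by blast+

lemma graph_carr:
  assumes "is_graph G" and "x \<in> carr G"
  shows "grev G x \<in> carr G" and "grev G (grev G x) = x" and "gorg G x \<in> gverts G"
    and "tgt G x \<in> gverts G" and "tgt G (grev G x) = gorg G x"
  using is_graphD(1-3)[OF assms] is_graphD(3)[OF assms(1) is_graphD(1)[OF assms]]
  unfolding tgt_def by simp_all

lemma graph_vert:
  assumes "is_graph G" and "v \<in> gverts G"
  shows "grev G v = v" and "gorg G v = v" and "tgt G v = v"
proof -
  have "v \<in> carr G" using assms(2) unfolding carr_def by blast
  then show "grev G v = v" "gorg G v = v"
    using is_graphD(4,5)[OF assms(1)] assms(2) by blast+
  then show "tgt G v = v" unfolding tgt_def by simp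
qed

lemma graph_edge:
  assumes "is_graph G" and "x \<in> gedges G"
  shows "grev G x \<in> gedges G" and "grev G (grev G x) = x" and "gorg G x \<in> gverts G"
    and "tgt G x \<in> gverts G" and "tgt G (grev G x) = gorg G x"
proof -
  have x: "x \<in> carr G" "x \<notin> gverts G"
    using assms unfolding is_graph_def carr_def by blast+
  show "grev G (grev G x) = x" "gorg G x \<in> gverts G" "tgt G x \<in> gverts G" "tgt G (grev G x) = gorg G x"
    using graph_carr[OF assms(1) x(1)] by simp_all
  have "grev G x \<notin> gverts G"
    using graph_carr(2)[OF assms(1) x(1)] graph_vert(1)[OF assms(1)] x(2) by metis
  then show "grev G x \<in> gedges G"
    using graph_carr(1)[OF assms(1) x(1)] unfolding carr_def by blast
qed

lemma graph_mor_carr: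
  assumes "graph_mor B Y f" and "is_graph B" and "z \<in> carr B"
  shows "f z \<in> carr Y" and "f (grev B z) = grev Y (f z)" and "f (gorg B z) = gorg Y (f z)"
    and "f (tgt B z) = tgt Y (f z)"
proof -
  have m: "\<And>z. z \<in> carr B \<Longrightarrow> f z \<in> carr Y \<and> f (grev B z) = grev Y (f z) \<and> f (gorg B z) = gorg Y (f z)"
    using assms(1) unfolding graph_mor_def by blast
  show "f z \<in> carr Y" "f (grev B z) = grev Y (f z)" "f (gorg B z) = gorg Y (f z)"
    using m[OF assms(3)] by simp_all
  then show "f (tgt B z) = tgt Y (f z)"
    using m[OF graph_carr(1)[OF assms(2,3)]] unfolding tgt_def by simp
qed

lemma graph_mor_vert:
  assumes "graph_mor B Y f" and "is_graph B" and "is_graph Y" and "v \<in> gverts B"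
  shows "f v \<in> gverts Y"
proof -
  have v: "v \<in> carr B" using assms(4) unfolding carr_def by blast
  have "grev Y (f v) = f v"
    using graph_mor_carr(2)[OF assms(1,2) v] graph_vert(1)[OF assms(2,4)] by simp
  then show ?thesis
    using graph_mor_carr(1)[OF assms(1,2) v] assms(3) unfolding is_graph_def by blast
qed

lemma wpath_verts: "wpath G v w p \<Longrightarrow> is_graph G \<Longrightarrow> v \<in> gverts G \<and> w \<in> gverts G"
  by (induction rule: wpath.induct) (auto simp: graph_edge)

lemma wpath_append: "wpath G v a u \<Longrightarrow> wpath G a w s \<Longrightarrow> wpath G v w (u @ s)"
  by (induction rule: wpath.induct) (auto intro: wpath.intros)

lemma wpath_snoc_LG:
  assumes "is_graph G" and "wpath G v w q" and "g \<in> carrier (grp G w)"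
  shows "wpath G v w (q @ [LG w g])"
proof -
  have "w \<in> gverts G" using wpath_verts[OF assms(2,1)] by blast
  then have "wpath G w w [LG w g]" using assms(3) by (auto intro: wpath.intros)
  with assms(2) show ?thesis by (rule wpath_append)
qed

lemma wpath_mor:
  assumes "is_graph G" and "x \<in> carr G"
  shows "wpath G (gorg G x) (tgt G x) (mor G x)"
proof (cases "x \<in> gedges G")
  case True
  then show ?thesis unfolding mor_def using graph_edge[OF assms(1) True]
    by (auto intro: wpath.intros)
next
  case False
  then have "x \<in> gverts G" using assms(2) unfolding carr_def by blast
  then show ?thesis unfolding mor_def using False graph_vert[OF assms(1)] by (auto intro: wpath.intros)
qed

lemma wpath_edge_back_forth:
  assumes "is_graph G" and "x \<in> gedges G"
  shows "wpath G (tgt G x) (tgt G x) [LE (grev G x), LE x]"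
proof -
  note x = graph_edge[OF assms]
  have "wpath G (tgt G (grev G x)) (tgt G x) [LE x]"
    using wedge[OF assms(2) wnil[OF x(4)]] x(5) by simp
  from wedge[OF x(1) this] show ?thesis using x(2) unfolding tgt_def by simp
qed

lemma gog_graph: "is_gog G \<Longrightarrow> is_graph G"
  unfolding is_gog_def by blast

lemma gog_group: "is_gog G \<Longrightarrow> x \<in> carr G \<Longrightarrow> group (grp G x)"
  unfolding is_gog_def by blast

lemma gog_hm: "is_gog G \<Longrightarrow> x \<in> carr G \<Longrightarrow> hm G x \<in> hom (grp G x) (grp G (gorg G x))"
  unfolding is_gog_def by blast

lemma gog_hb: "is_gog G \<Longrightarrow> x \<in> carr G \<Longrightarrow> hb G x \<in> hom (grp G x) (grp G (grev G x))"
  unfolding is_gog_def by blast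

lemma gog_vert_hom_id:
  "is_gog G \<Longrightarrow> v \<in> gverts G \<Longrightarrow> g \<in> carrier (grp G v) \<Longrightarrow> hm G v g = g \<and> hb G v g = g"
  unfolding is_gog_def by blast

lemma peq_wpath:
  assumes "is_gog G"
  shows "peq G v w p q \<Longrightarrow> wpath G v w p \<and> wpath G v w q"
proof (induction rule: peq.induct)
  case (pctx a b l r v u w s)
  then show ?case by (auto intro: wpath_append)
next
  case (pmult v g h)
  then have "group (grp G v)" using gog_group[OF assms] unfolding carr_def by blast
  then have "g \<otimes>\<^bsub>grp G v\<^esub> h \<in> carrier (grp G v)" using pmult(2,3) by (rule monoid.m_closed[OF group.is_monoid])
  then show ?case using pmult by (blast intro: wpath.intros)
next
  case (pone v)
  then have "group (grp G v)" using gog_group[OF assms] unfolding carr_def by blast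
  then have "\<one>\<^bsub>grp G v\<^esub> \<in> carrier (grp G v)" by (rule monoid.one_closed[OF group.is_monoid])
  then show ?case using pone by (blast intro: wpath.intros)
next
  case (pinv x)
  note x = graph_edge[OF gog_graph[OF assms] pinv]
  have "wpath G (tgt G (grev G x)) (gorg G x) []" using wnil[OF x(3)] x(5) by simp
  from wedge[OF x(1) this] have "wpath G (tgt G x) (gorg G x) [LE (grev G x)]"
    unfolding tgt_def .
  then show ?case using wedge[OF pinv] wnil[OF x(3)] by simp
next
  case (pconj x g)
  have G: "is_graph G" using gog_graph[OF assms] .
  have x: "x \<in> carr G" "grev G x \<in> carr G"
    using pconj(1) graph_edge(1)[OF G pconj(1)] unfolding carr_def by blast+
  have "hm G x g \<in> carrier (grp G (gorg G x))"
    using hom_in_carrier[OF gog_hm[OF assms x(1)] pconj(2)] .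
  moreover have "hm G (grev G x) (hb G x g) \<in> carrier (grp G (tgt G x))"
    using hom_in_carrier[OF gog_hm[OF assms x(2)] hom_in_carrier[OF gog_hb[OF assms x(1)] pconj(2)]]
    unfolding tgt_def .
  ultimately show ?case using graph_edge[OF G pconj(1)] pconj(1)
    by (auto intro!: wpath.intros)
qed (blast+)

lemma peq_prepend:
  assumes "is_gog G" and "peq G a b l r" and "wpath G v a u"
  shows "peq G v b (u @ l) (u @ r)"
proof -
  have "b \<in> gverts G"
    using wpath_verts[OF conjunct1[OF peq_wpath[OF assms(1,2)]] gog_graph[OF assms(1)]] by blast
  from pctx[OF assms(2,3) wnil[OF this]] show ?thesis by simp
qed

lemma peq_append:
  assumes "is_gog G" and "peq G a b l r" and "wpath G b w s"
  shows "peq G a w (l @ s) (r @ s)"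
proof -
  have "a \<in> gverts G"
    using wpath_verts[OF conjunct1[OF peq_wpath[OF assms(1,2)]] gog_graph[OF assms(1)]] by blast
  from pctx[OF assms(2) wnil[OF this] assms(3)] show ?thesis by simp
qed

lemma peq_mor_cancel:
  assumes "is_gog G" and "y \<in> carr G"
  shows "peq G (gorg G y) (gorg G y) (mor G y @ [LG (tgt G y) \<one>\<^bsub>grp G (tgt G y)\<^esub>] @ mor G (grev G y)) []"
proof (cases "y \<in> gedges G")
  case True
  note e = graph_edge[OF gog_graph[OF assms(1)] True]
  have "peq G (tgt G y) (tgt G y) [LG (tgt G y) \<one>\<^bsub>grp G (tgt G y)\<^esub>] []"
    using e by (intro pone)
  moreover have "wpath G (gorg G y) (tgt G y) [LE y]" "wpath G (tgt G y) (gorg G y) [LE (grev G y)]"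
    using e True by (auto intro!: wpath.intros simp: tgt_def)
  ultimately have "peq G (gorg G y) (gorg G y) ([LE y] @ [LG (tgt G y) \<one>\<^bsub>grp G (tgt G y)\<^esub>] @ [LE (grev G y)])
      ([LE y] @ [] @ [LE (grev G y)])"
    by (rule pctx)
  moreover have "peq G (gorg G y) (gorg G y) [LE y, LE (grev G y)] []" using True by (rule pinv)
  ultimately show ?thesis using True e(1) unfolding mor_def by (simp add: ptrans)
next
  case False
  then have "y \<in> gverts G" using assms(2) unfolding carr_def by blast
  then show ?thesis using False graph_vert[OF gog_graph[OF assms(1)]] unfolding mor_def
    by (simp add: pone)
qed

lemma peq_mor_conj:
  assumes "is_gog G" and "y \<in> carr G" and "k \<in> carrier (grp G y)"
  shows "peq G (gorg G y) (tgt G y) ([LG (gorg G y) (hm G y k)] @ mor G y)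
     (mor G y @ [LG (tgt G y) (hm G (grev G y) (hb G y k))])"
proof (cases "y \<in> gedges G")
  case True
  then show ?thesis unfolding mor_def using pconj[OF True assms(3)] by simp
next
  case False
  then have v: "y \<in> gverts G" using assms(2) unfolding carr_def by blast
  have "hm G y k = k" "hb G y k = k" using gog_vert_hom_id[OF assms(1) v assms(3)] by auto
  then show ?thesis using False graph_vert[OF gog_graph[OF assms(1)] v] v assms(3) unfolding mor_def
    by (auto intro!: prefl wpath.intros)
qed

lemma peq_mult_mor_conj:
  assumes "is_gog G" and "y \<in> carr G" and "wpath G v (gorg G y) q"
    and "g \<in> carrier (grp G (gorg G y))" and "k \<in> carrier (grp G y)"
  shows "peq G v (tgt G y) (q @ [LG (gorg G y) (g \<otimes>\<^bsub>grp G (gorg G y)\<^esub> hm G y k)] @ mor G y)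
      ((q @ [LG (gorg G y) g] @ mor G y) @ [LG (tgt G y) (hm G (grev G y) (hb G y k))])"
proof -
  have o: "gorg G y \<in> gverts G" using graph_carr(3)[OF gog_graph[OF assms(1)] assms(2)] .
  have hk: "hm G y k \<in> carrier (grp G (gorg G y))"
    using hom_in_carrier[OF gog_hm[OF assms(1,2)] assms(5)] .
  have mult: "peq G v (tgt G y) (q @ [LG (gorg G y) g, LG (gorg G y) (hm G y k)] @ mor G y)
      (q @ [LG (gorg G y) (g \<otimes>\<^bsub>grp G (gorg G y)\<^esub> hm G y k)] @ mor G y)"
    using pctx[OF pmult[OF o assms(4) hk] assms(3) wpath_mor[OF gog_graph[OF assms(1)] assms(2)]] .
  have "peq G v (tgt G y) ((q @ [LG (gorg G y) g]) @ [LG (gorg G y) (hm G y k)] @ mor G y)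
      ((q @ [LG (gorg G y) g]) @ mor G y @ [LG (tgt G y) (hm G (grev G y) (hb G y k))])"
    using peq_prepend[OF assms(1) peq_mor_conj[OF assms(1,2,5)]
        wpath_snoc_LG[OF gog_graph[OF assms(1)] assms(3,4)]] by simp
  then have conj: "peq G v (tgt G y) (q @ [LG (gorg G y) g, LG (gorg G y) (hm G y k)] @ mor G y)
      ((q @ [LG (gorg G y) g] @ mor G y) @ [LG (tgt G y) (hm G (grev G y) (hb G y k))])"
    by simp
  show ?thesis using ptrans[OF psym[OF mult] conj] .
qed

section \<open>Graphs of bisets\<close>

lemma biset_congruence_one_sided:
  assumes S: "is_biset GL GR S l r" and S': "is_biset GL' GR' S' l' r'"
    and groups: "group GL" "group GR" "group GL'" "group GR'"
    and homs: "\<phi> \<in> hom GL GL'" "\<psi> \<in> hom GR GR'"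
    and closed: "\<And>b. b \<in> S \<Longrightarrow> F b \<in> S'"
    and cong: "\<And>g h b. g \<in> carrier GL \<Longrightarrow> h \<in> carrier GR \<Longrightarrow> b \<in> S \<Longrightarrow>
                 F (l g (r b h)) = l' (\<phi> g) (r' (F b) (\<psi> h))"
  shows "\<And>g b. g \<in> carrier GL \<Longrightarrow> b \<in> S \<Longrightarrow> F (l g b) = l' (\<phi> g) (F b)"
    and "\<And>h b. h \<in> carrier GR \<Longrightarrow> b \<in> S \<Longrightarrow> F (r b h) = r' (F b) (\<psi> h)"
proof -
  have one: "\<phi> \<one>\<^bsub>GL\<^esub> = \<one>\<^bsub>GL'\<^esub>" "\<psi> \<one>\<^bsub>GR\<^esub> = \<one>\<^bsub>GR'\<^esub>"
    using hom_one[OF homs(1) groups(1,3)] hom_one[OF homs(2) groups(2,4)] .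
  have one_closed: "\<one>\<^bsub>GL\<^esub> \<in> carrier GL" "\<one>\<^bsub>GR\<^esub> \<in> carrier GR"
    using groups(1,2) by (simp_all add: monoid.one_closed group.is_monoid)
  fix g h b
  show "g \<in> carrier GL \<Longrightarrow> b \<in> S \<Longrightarrow> F (l g b) = l' (\<phi> g) (F b)"
    using cong[OF _ one_closed(2)] one S S' closed unfolding is_biset_def by simp
  show "h \<in> carrier GR \<Longrightarrow> b \<in> S \<Longrightarrow> F (r b h) = r' (F b) (\<psi> h)"
    using cong[OF one_closed(1)] one S S' closed homs(2) unfolding is_biset_def
    by (simp add: hom_in_carrier)
qed

locale graph_of_bisets =
  fixes Y :: "('y,'g) gog" and X :: "('x,'h) gog" and B :: "('z,'y,'x,'g,'h,'b) gobs"
  assumes gog_Y: "is_gog Y" and gog_X: "is_gog X" and gobs: "is_gobs Y X B"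
begin

lemmas gobs_at = gobs[unfolded is_gobs_def, THEN conjunct2, THEN conjunct2, THEN conjunct2,
    THEN conjunct1, THEN bspec]

lemma graph_Y: "is_graph Y" using gog_graph[OF gog_Y] .
lemma graph_X: "is_graph X" using gog_graph[OF gog_X] .
lemma graph_B: "is_graph B"
  using gobs[unfolded is_gobs_def, THEN conjunct1] .

lemma lam_mor: "graph_mor B Y (lam B)"
  using gobs[unfolded is_gobs_def, THEN conjunct2, THEN conjunct1] .

lemma rho_mor: "graph_mor B X (rho B)"
  using gobs[unfolded is_gobs_def, THEN conjunct2, THEN conjunct2, THEN conjunct1] .

lemma lam_carr:
  assumes "z \<in> carr B"
  shows "lam B z \<in> carr Y" and "lam B (grev B z) = grev Y (lam B z)"
    and "lam B (gorg B z) = gorg Y (lam B z)" and "lam B (tgt B z) = tgt Y (lam B z)"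
  using graph_mor_carr[OF lam_mor graph_B assms] by blast+

lemma rho_carr:
  assumes "z \<in> carr B"
  shows "rho B z \<in> carr X" and "rho B (grev B z) = grev X (rho B z)"
    and "rho B (gorg B z) = gorg X (rho B z)" and "rho B (tgt B z) = tgt X (rho B z)"
  using graph_mor_carr[OF rho_mor graph_B assms] by blast+

lemma lam_vert: "z \<in> gverts B \<Longrightarrow> lam B z \<in> gverts Y"
  using graph_mor_vert[OF lam_mor graph_B graph_Y] .

lemma gorg_carr: "z \<in> carr B \<Longrightarrow> gorg B z \<in> carr B"
  using graph_carr(3)[OF graph_B] unfolding carr_def by blast

lemma grev_carr: "z \<in> carr B \<Longrightarrow> grev B z \<in> carr B"
  using graph_carr(1)[OF graph_B] .

lemma group_lam: "z \<in> carr B \<Longrightarrow> group (grp Y (lam B z))"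
  using gog_group[OF gog_Y lam_carr(1)] .

lemma group_rho: "z \<in> carr B \<Longrightarrow> group (grp X (rho B z))"
  using gog_group[OF gog_X rho_carr(1)] .

lemma hm_lam: "z \<in> carr B \<Longrightarrow> hm Y (lam B z) \<in> hom (grp Y (lam B z)) (grp Y (lam B (gorg B z)))"
  using gog_hm[OF gog_Y lam_carr(1)] lam_carr(3) by simp

lemma hb_lam: "z \<in> carr B \<Longrightarrow> hb Y (lam B z) \<in> hom (grp Y (lam B z)) (grp Y (lam B (grev B z)))"
  using gog_hb[OF gog_Y lam_carr(1)] lam_carr(2) by simp

lemma hm_rho: "z \<in> carr B \<Longrightarrow> hm X (rho B z) \<in> hom (grp X (rho B z)) (grp X (rho B (gorg B z)))"
  using gog_hm[OF gog_X rho_carr(1)] rho_carr(3) by simp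

lemma hb_rho: "z \<in> carr B \<Longrightarrow> hb X (rho B z) \<in> hom (grp X (rho B z)) (grp X (rho B (grev B z)))"
  using gog_hb[OF gog_X rho_carr(1)] rho_carr(2) by simp

lemma biset: "z \<in> carr B \<Longrightarrow> is_biset (grp Y (lam B z)) (grp X (rho B z)) (bs B z) (lact B z) (ract B z)"
  using gobs_at by blast

lemma lact_closed: "z \<in> carr B \<Longrightarrow> g \<in> carrier (grp Y (lam B z)) \<Longrightarrow> b \<in> bs B z \<Longrightarrow> lact B z g b \<in> bs B z"
  using biset unfolding is_biset_def by blast

lemma ract_closed: "z \<in> carr B \<Longrightarrow> h \<in> carrier (grp X (rho B z)) \<Longrightarrow> b \<in> bs B z \<Longrightarrow> ract B z b h \<in> bs B z"
  using biset unfolding is_biset_def by blast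

lemma one_lam_closed: "z \<in> carr B \<Longrightarrow> \<one>\<^bsub>grp Y (lam B z)\<^esub> \<in> carrier (grp Y (lam B z))"
  using group_lam by (simp add: monoid.one_closed group.is_monoid)

lemma lact_one: "z \<in> carr B \<Longrightarrow> b \<in> bs B z \<Longrightarrow> lact B z \<one>\<^bsub>grp Y (lam B z)\<^esub> b = b"
  using biset unfolding is_biset_def by blast

lemma ract_one: "z \<in> carr B \<Longrightarrow> b \<in> bs B z \<Longrightarrow> ract B z b \<one>\<^bsub>grp X (rho B z)\<^esub> = b"
  using biset unfolding is_biset_def by blast

lemma lact_mult:
  "z \<in> carr B \<Longrightarrow> g \<in> carrier (grp Y (lam B z)) \<Longrightarrow> g' \<in> carrier (grp Y (lam B z)) \<Longrightarrow> b \<in> bs B z \<Longrightarrow>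
   lact B z (g \<otimes>\<^bsub>grp Y (lam B z)\<^esub> g') b = lact B z g (lact B z g' b)"
  using biset unfolding is_biset_def by blast

lemma ract_mult:
  "z \<in> carr B \<Longrightarrow> h \<in> carrier (grp X (rho B z)) \<Longrightarrow> h' \<in> carrier (grp X (rho B z)) \<Longrightarrow> b \<in> bs B z \<Longrightarrow>
   ract B z b (h \<otimes>\<^bsub>grp X (rho B z)\<^esub> h') = ract B z (ract B z b h) h'"
  using biset unfolding is_biset_def by blast

lemma lact_ract:
  "z \<in> carr B \<Longrightarrow> g \<in> carrier (grp Y (lam B z)) \<Longrightarrow> h \<in> carrier (grp X (rho B z)) \<Longrightarrow> b \<in> bs B z \<Longrightarrow>
   lact B z g (ract B z b h) = ract B z (lact B z g b) h"
  using biset unfolding is_biset_def by blast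

lemma bm_closed: "z \<in> carr B \<Longrightarrow> b \<in> bs B z \<Longrightarrow> bm B z b \<in> bs B (gorg B z)"
  using gobs_at by blast

lemma bb_closed: "z \<in> carr B \<Longrightarrow> b \<in> bs B z \<Longrightarrow> bb B z b \<in> bs B (grev B z)"
  using gobs_at by blast

lemma bb_bb: "z \<in> carr B \<Longrightarrow> b \<in> bs B z \<Longrightarrow> bb B (grev B z) (bb B z b) = b"
  using gobs_at by blast

lemma bm_lact_ract:
  assumes "z \<in> carr B"
  shows "\<And>g h b. g \<in> carrier (grp Y (lam B z)) \<Longrightarrow> h \<in> carrier (grp X (rho B z)) \<Longrightarrow> b \<in> bs B z \<Longrightarrow>
    bm B z (lact B z g (ract B z b h)) =
    lact B (gorg B z) (hm Y (lam B z) g) (ract B (gorg B z) (bm B z b) (hm X (rho B z) h))"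
  using gobs_at[OF assms] by blast

lemma bb_lact_ract:
  assumes "z \<in> carr B"
  shows "\<And>g h b. g \<in> carrier (grp Y (lam B z)) \<Longrightarrow> h \<in> carrier (grp X (rho B z)) \<Longrightarrow> b \<in> bs B z \<Longrightarrow>
    bb B z (lact B z g (ract B z b h)) =
    lact B (grev B z) (hb Y (lam B z) g) (ract B (grev B z) (bb B z b) (hb X (rho B z) h))"
  using gobs_at[OF assms] by blast

context
  fixes z assumes z: "z \<in> carr B"
begin

lemmas bm_congruence = biset_congruence_one_sided[where F="bm B z" and \<phi>="hm Y (lam B z)"
    and \<psi>="hm X (rho B z)", OF biset[OF z] biset[OF gorg_carr[OF z]] group_lam[OF z] group_rho[OF z]
    group_lam[OF gorg_carr[OF z]] group_rho[OF gorg_carr[OF z]] hm_lam[OF z] hm_rho[OF z]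
    bm_closed[OF z] bm_lact_ract[OF z]]

lemmas bb_congruence = biset_congruence_one_sided[where F="bb B z" and \<phi>="hb Y (lam B z)"
    and \<psi>="hb X (rho B z)", OF biset[OF z] biset[OF grev_carr[OF z]] group_lam[OF z] group_rho[OF z]
    group_lam[OF grev_carr[OF z]] group_rho[OF grev_carr[OF z]] hb_lam[OF z] hb_rho[OF z]
    bb_closed[OF z] bb_lact_ract[OF z]]

lemma bm_lact: "g \<in> carrier (grp Y (lam B z)) \<Longrightarrow> b \<in> bs B z \<Longrightarrow>
    bm B z (lact B z g b) = lact B (gorg B z) (hm Y (lam B z) g) (bm B z b)"
  by (rule bm_congruence(1))

lemma bm_ract: "h \<in> carrier (grp X (rho B z)) \<Longrightarrow> b \<in> bs B z \<Longrightarrow>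
    bm B z (ract B z b h) = ract B (gorg B z) (bm B z b) (hm X (rho B z) h)"
  by (rule bm_congruence(2))

lemma bb_lact: "g \<in> carrier (grp Y (lam B z)) \<Longrightarrow> b \<in> bs B z \<Longrightarrow>
    bb B z (lact B z g b) = lact B (grev B z) (hb Y (lam B z) g) (bb B z b)"
  by (rule bb_congruence(1))

lemma bb_ract: "h \<in> carrier (grp X (rho B z)) \<Longrightarrow> b \<in> bs B z \<Longrightarrow>
    bb B z (ract B z b h) = ract B (grev B z) (bb B z b) (hb X (rho B z) h)"
  by (rule bb_congruence(2))

end

lemma bm_bb_lact:
  assumes "z \<in> carr B" and "k \<in> carrier (grp Y (lam B z))" and "c \<in> bs B z"
  shows "bm B (grev B z) (bb B z (lact B z k c)) =
    lact B (tgt B z) (hm Y (grev Y (lam B z)) (hb Y (lam B z) k)) (bm B (grev B z) (bb B z c))"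
proof -
  have "hb Y (lam B z) k \<in> carrier (grp Y (lam B (grev B z)))"
    using hom_in_carrier[OF hb_lam[OF assms(1)] assms(2)] .
  then show ?thesis
    using bb_lact[OF assms] bm_lact[OF grev_carr[OF assms(1)] _ bb_closed[OF assms(1,3)]]
      lam_carr(2)[OF assms(1)] unfolding tgt_def by simp
qed

lemma bm_bb_ract:
  assumes "z \<in> carr B" and "h \<in> carrier (grp X (rho B z))" and "c \<in> bs B z"
  shows "bm B (grev B z) (bb B z (ract B z c h)) =
    ract B (tgt B z) (bm B (grev B z) (bb B z c)) (hm X (grev X (rho B z)) (hb X (rho B z) h))"
proof -
  have "hb X (rho B z) h \<in> carrier (grp X (rho B (grev B z)))"
    using hom_in_carrier[OF hb_rho[OF assms(1)] assms(2)] .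
  then show ?thesis
    using bb_ract[OF assms] bm_ract[OF grev_carr[OF assms(1)] _ bb_closed[OF assms(1,3)]]
      rho_carr(2)[OF assms(1)] unfolding tgt_def by simp
qed

end

section \<open>Left-fibrancy\<close>

locale left_fibrant_graph_of_bisets = graph_of_bisets Y X B
  for Y :: "('y,'g) gog" and X :: "('x,'h) gog" and B :: "('z,'y,'x,'g,'h,'b) gobs" +
  assumes left_fibrant: "left_fibrant Y X B"
begin

lemma rho_edge: "z \<in> gedges B \<Longrightarrow> rho B z \<in> gedges X"
  using left_fibrant[unfolded left_fibrant_def, THEN conjunct1] by blast

text \<open>The map g \<otimes> c \<mapsto> g c^- of the definition of left-fibrancy, on representatives (e, g, c).\<close>

definition fib_eval :: "'z \<Rightarrow> 'z \<times> 'g \<times> 'b \<Rightarrow> 'b" where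
  "fib_eval v = (\<lambda>(e, g, c). lact B v g (bm B e c))"

lemma fib_eval_simp [simp]: "fib_eval v (e, g, c) = lact B v g (bm B e c)"
  unfolding fib_eval_def by simp

lemma fib_domD:
  assumes "(e, g, c) \<in> fib_dom Y B v f"
  shows "e \<in> gedges B" and "rho B e = f" and "gorg B e = v" and "g \<in> carrier (grp Y (lam B v))"
    and "c \<in> bs B e" and "e \<in> carr B" and "v \<in> gverts B" and "tgt B e \<in> gverts B"
    and "bm B e c \<in> bs B v" and "bm B (grev B e) (bb B e c) \<in> bs B (tgt B e)"
proof -
  show e: "e \<in> gedges B" "rho B e = f" "gorg B e = v" "g \<in> carrier (grp Y (lam B v))" "c \<in> bs B e"
    using assms unfolding fib_dom_def by simp_all
  show "e \<in> carr B" using e(1) by (rule edge_carr)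
  show "v \<in> gverts B" "tgt B e \<in> gverts B" using graph_edge(3,4)[OF graph_B e(1)] e(3) by simp_all
  show "bm B e c \<in> bs B v" using bm_closed[OF edge_carr[OF e(1)] e(5)] e(3) by simp
  show "bm B (grev B e) (bb B e c) \<in> bs B (tgt B e)"
    using bm_closed[OF grev_carr[OF edge_carr[OF e(1)]] bb_closed[OF edge_carr[OF e(1)] e(5)]]
    unfolding tgt_def .
qed

lemma fib_eval_respects:
  assumes "(a, a') \<in> fib_rel Y B v f"
  shows "fib_eval v a = fib_eval v a'"
  using assms unfolding fib_rel_def
proof (rule eqc_invariant)
  fix x y
  assume "(x, y) \<in> {((e, g \<otimes>\<^bsub>grp Y (lam B v)\<^esub> hm Y (lam B e) k, b), (e, g, lact B e k b)) | e g b k.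
        k \<in> carrier (grp Y (lam B e))}" and "x \<in> fib_dom Y B v f" and y: "y \<in> fib_dom Y B v f"
  then obtain e g c k where xy: "x = (e, g \<otimes>\<^bsub>grp Y (lam B v)\<^esub> hm Y (lam B e) k, c)" "y = (e, g, lact B e k c)"
    and k: "k \<in> carrier (grp Y (lam B e))" and x: "x \<in> fib_dom Y B v f"
    by blast
  have c: "c \<in> bs B e" using x unfolding xy fib_dom_def by simp
  note e = fib_domD[OF y[unfolded xy]]
  have hk: "hm Y (lam B e) k \<in> carrier (grp Y (lam B v))"
    using hom_in_carrier[OF hm_lam[OF e(6)] k] e(3) by simp
  have "fib_eval v x = lact B v g (lact B v (hm Y (lam B e) k) (bm B e c))"
    unfolding xy using lact_mult[OF vert_carr[OF e(7)] e(4) hk] bm_closed[OF e(6) c] e(3) by simp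
  also have "\<dots> = fib_eval v y"
    unfolding xy using bm_lact[OF e(6) k c] e(3) by simp
  finally show "fib_eval v x = fib_eval v y" .
qed

lemma fib_eval_class:
  assumes "a \<in> fib_dom Y B v f"
  shows "the_elem (fib_eval v ` (fib_rel Y B v f `` {a})) = fib_eval v a"
proof -
  have "a \<in> fib_rel Y B v f `` {a}"
    using equiv_class_self[OF equiv_eqc assms] unfolding fib_rel_def .
  moreover have "fib_eval v a' = fib_eval v a" if "a' \<in> fib_rel Y B v f `` {a}" for a'
    using fib_eval_respects that by (metis Image_singleton_iff)
  ultimately have "fib_eval v ` (fib_rel Y B v f `` {a}) = {fib_eval v a}" by blast
  then show ?thesis by simp
qed

context
  fixes v f
  assumes v: "v \<in> gverts B" and f: "f \<in> gedges X" "gorg X f = rho B v"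
begin

lemma fib_eval_bij:
  "bij_betw (\<lambda>C. the_elem (fib_eval v ` C)) (fib_dom Y B v f // fib_rel Y B v f) (bs B v)"
  using left_fibrant[unfolded left_fibrant_def, THEN conjunct2] v f unfolding fib_eval_def by blast

lemma fib_eval_inj:
  assumes "a \<in> fib_dom Y B v f" and "a' \<in> fib_dom Y B v f" and "fib_eval v a = fib_eval v a'"
  shows "(a, a') \<in> fib_rel Y B v f"
proof -
  have "fib_rel Y B v f `` {a} = fib_rel Y B v f `` {a'}"
    using inj_onD[OF bij_betw_imp_inj_on[OF fib_eval_bij] _ quotientI[OF assms(1)] quotientI[OF assms(2)]]
      fib_eval_class[OF assms(1)] fib_eval_class[OF assms(2)] assms(3) by simp
  then show ?thesis
    using eq_equiv_class_iff[OF equiv_eqc assms(1,2)] unfolding fib_rel_def by simp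
qed

lemma fib_eval_surj:
  assumes "b \<in> bs B v"
  shows "\<exists>a \<in> fib_dom Y B v f. fib_eval v a = b"
proof -
  have "b \<in> (\<lambda>C. the_elem (fib_eval v ` C)) ` (fib_dom Y B v f // fib_rel Y B v f)"
    using bij_betw_imp_surj_on[OF fib_eval_bij] assms by simp
  then obtain C where C: "C \<in> fib_dom Y B v f // fib_rel Y B v f" "b = the_elem (fib_eval v ` C)"
    by blast
  from C(1) obtain a where "C = fib_rel Y B v f `` {a}" "a \<in> fib_dom Y B v f" by (rule quotientE)
  then show ?thesis using fib_eval_class[of a] C(2) by auto
qed

end

definition fib_split :: "'z \<Rightarrow> 'x \<Rightarrow> 'b \<Rightarrow> 'z \<times> 'g \<times> 'b" where
  "fib_split v f b = (SOME a. a \<in> fib_dom Y B v f \<and> fib_eval v a = b)"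

lemma fib_split:
  assumes "v \<in> gverts B" and "f \<in> gedges X" and "gorg X f = rho B v" and "b \<in> bs B v"
  shows "fib_split v f b \<in> fib_dom Y B v f" and "fib_eval v (fib_split v f b) = b"
  using someI_ex[OF fib_eval_surj[OF assms, unfolded Bex_def]] unfolding fib_split_def by blast+

end

section \<open>Lifting paths of X\<close>

locale lifting = left_fibrant_graph_of_bisets Y X B
  for Y :: "('y,'g) gog" and X :: "('x,'h) gog" and B :: "('z,'y,'x,'g,'h,'b) gobs" +
  fixes dag :: 'y
begin

abbreviation Ldom where "Ldom x \<equiv> lhs_dom Y X B dag x"
abbreviation Lrel where "Lrel x \<equiv> lhs_rel Y X B dag x"

definition lhs_gen :: "(('z \<times> ('y,'g) letter list \<times> 'b) \<times> ('z \<times> ('y,'g) letter list \<times> 'b)) set" where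
  "lhs_gen = {((z, q, b), (z, q', b)) | z q q' b. peq Y dag (lam B z) q q'} \<union>
      {((z, q @ [LG (lam B z) g], b), (z, q, lact B z g b)) | z q g b. g \<in> carrier (grp Y (lam B z))}"

lemma Lrel_eqc: "Lrel x = eqc (Ldom x) lhs_gen"
  unfolding lhs_rel_def lhs_gen_def ..

lemma lhs_genE:
  assumes "(a, a') \<in> lhs_gen"
  obtains (peq) z q q' b where "a = (z, q, b)" and "a' = (z, q', b)" and "peq Y dag (lam B z) q q'"
  | (LG) z q g b where "a = (z, q @ [LG (lam B z) g], b)" and "a' = (z, q, lact B z g b)"
      and "g \<in> carrier (grp Y (lam B z))"
  using assms unfolding lhs_gen_def by blast

lemma Ldom_iff: "(z, q, b) \<in> Ldom x \<longleftrightarrow> z \<in> gverts B \<and> rho B z = x \<and> wpath Y dag (lam B z) q \<and> b \<in> bs B z"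
  unfolding lhs_dom_def by simp

lemma equiv_Lrel: "equiv (Ldom x) (Lrel x)"
  unfolding Lrel_eqc by (rule equiv_eqc)

lemma Lrel_refl: "T \<in> Ldom x \<Longrightarrow> (T, T) \<in> Lrel x"
  unfolding Lrel_eqc by (rule eqc_refl)

lemma Lrel_sym: "(T, T') \<in> Lrel x \<Longrightarrow> (T', T) \<in> Lrel x"
  unfolding Lrel_eqc by (rule eqc_sym)

lemma Lrel_trans: "(T, T') \<in> Lrel x \<Longrightarrow> (T', T'') \<in> Lrel x \<Longrightarrow> (T, T'') \<in> Lrel x"
  unfolding Lrel_eqc by (rule eqc_trans)

lemma Lrel_peq:
  assumes "z \<in> gverts B" and "rho B z = x" and "b \<in> bs B z" and "peq Y dag (lam B z) q q'"
  shows "((z, q, b), (z, q', b)) \<in> Lrel x"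
  using peq_wpath[OF gog_Y assms(4)] assms unfolding Lrel_eqc
  by (intro eqc_base) (auto simp: Ldom_iff lhs_gen_def)

lemma Lrel_LG:
  assumes "z \<in> gverts B" and "rho B z = x" and "wpath Y dag (lam B z) q"
    and "g \<in> carrier (grp Y (lam B z))" and "b \<in> bs B z"
  shows "((z, q @ [LG (lam B z) g], b), (z, q, lact B z g b)) \<in> Lrel x"
  using wpath_snoc_LG[OF graph_Y assms(3,4)] lact_closed[OF vert_carr[OF assms(1)] assms(4,5)] assms
  unfolding Lrel_eqc by (intro eqc_base) (auto simp: Ldom_iff lhs_gen_def)

lemma Lrel_map:
  assumes "(T, T') \<in> Lrel x" and "\<And>a. a \<in> Ldom x \<Longrightarrow> F a \<in> Ldom x'"
    and "\<And>a a'. (a, a') \<in> lhs_gen \<Longrightarrow> a \<in> Ldom x \<Longrightarrow> a' \<in> Ldom x \<Longrightarrow> (F a, F a') \<in> Lrel x'"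
  shows "(F T, F T') \<in> Lrel x'"
  using assms(1) unfolding Lrel_eqc by (rule eqc_map) (use assms(2,3) in \<open>simp_all add: Lrel_eqc\<close>)

text \<open>In \<pi>_1(B) one has q \<otimes> g c^- \<otimes> f p = q g \<lambda>(e) \<otimes> (e bar)^-(c bar) \<otimes> p for an edge e
  over f; cross q v (e, g, c) is the representative on the right.\<close>

definition cross :: "('y,'g) letter list \<Rightarrow> 'z \<Rightarrow> 'z \<times> 'g \<times> 'b \<Rightarrow> 'z \<times> ('y,'g) letter list \<times> 'b" where
  "cross q v = (\<lambda>(e, g, c). (tgt B e, q @ [LG (lam B v) g] @ mor Y (lam B e), bm B (grev B e) (bb B e c)))"

lemma cross_simp [simp]:
  "cross q v (e, g, c) = (tgt B e, q @ [LG (lam B v) g] @ mor Y (lam B e), bm B (grev B e) (bb B e c))"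
  unfolding cross_def by simp

lemma wpath_cross:
  assumes "(e, g, c) \<in> fib_dom Y B v f"
  shows "wpath Y (lam B v) (lam B (tgt B e)) ([LG (lam B v) g] @ mor Y (lam B e))"
proof -
  note e = fib_domD[OF assms]
  have "wpath Y (lam B v) (lam B v) [LG (lam B v) g]"
    using welt[OF lam_vert[OF e(7)] e(4) wnil[OF lam_vert[OF e(7)]]] .
  moreover have "wpath Y (lam B v) (lam B (tgt B e)) (mor Y (lam B e))"
    using wpath_mor[OF graph_Y lam_carr(1)[OF e(6)]] lam_carr(3,4)[OF e(6)] e(3) by simp
  ultimately show ?thesis by (rule wpath_append)
qed

lemma cross_Ldom:
  assumes "(e, g, c) \<in> fib_dom Y B v f" and "wpath Y dag (lam B v) q"
  shows "cross q v (e, g, c) \<in> Ldom (tgt X f)"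
  using fib_domD[OF assms(1)] wpath_append[OF assms(2) wpath_cross[OF assms(1)]] rho_carr(4)
  by (simp add: Ldom_iff)

lemma cross_gen_respects:
  assumes "wpath Y dag (lam B v) q" and "x \<in> fib_dom Y B v f" and "y \<in> fib_dom Y B v f"
    and "(x, y) \<in> {((e, g \<otimes>\<^bsub>grp Y (lam B v)\<^esub> hm Y (lam B e) k, b), (e, g, lact B e k b)) | e g b k.
        k \<in> carrier (grp Y (lam B e))}"
  shows "(cross q v x, cross q v y) \<in> Lrel (tgt X f)"
proof -
  from assms(4) obtain e g c k where xy: "x = (e, g \<otimes>\<^bsub>grp Y (lam B v)\<^esub> hm Y (lam B e) k, c)"
    "y = (e, g, lact B e k c)" and k: "k \<in> carrier (grp Y (lam B e))"
    by blast
  note e = fib_domD[OF assms(2)[unfolded xy]] and g = fib_domD(4)[OF assms(3)[unfolded xy]]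
  note l = lam_carr[OF e(6)]
  have rt: "rho B (tgt B e) = tgt X f" using rho_carr(4)[OF e(6)] e(2) by simp
  have q: "wpath Y dag (gorg Y (lam B e)) q" using assms(1) l(3) e(3) by simp
  let ?k' = "hm Y (grev Y (lam B e)) (hb Y (lam B e) k)"
  let ?q' = "q @ [LG (lam B v) g] @ mor Y (lam B e)"
  let ?c' = "bm B (grev B e) (bb B e c)"
  have "peq Y dag (lam B (tgt B e)) (q @ [LG (lam B v) (g \<otimes>\<^bsub>grp Y (lam B v)\<^esub> hm Y (lam B e) k)] @ mor Y (lam B e))
      (?q' @ [LG (lam B (tgt B e)) ?k'])"
    using peq_mult_mor_conj[OF gog_Y l(1) q _ k] g l(3,4) e(3) by simp
  then have "(cross q v x, (tgt B e, ?q' @ [LG (lam B (tgt B e)) ?k'], ?c')) \<in> Lrel (tgt X f)"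
    unfolding xy using Lrel_peq[OF e(8) rt e(10)] by simp
  moreover have "((tgt B e, ?q' @ [LG (lam B (tgt B e)) ?k'], ?c'), (tgt B e, ?q', lact B (tgt B e) ?k' ?c'))
      \<in> Lrel (tgt X f)"
  proof (rule Lrel_LG[OF e(8) rt _ _ e(10)])
    show "wpath Y dag (lam B (tgt B e)) ?q'"
      using wpath_append[OF assms(1) wpath_cross[OF assms(3)[unfolded xy]]] .
    show "?k' \<in> carrier (grp Y (lam B (tgt B e)))"
      using hom_in_carrier[OF hm_lam[OF grev_carr[OF e(6)]] hom_in_carrier[OF hb_lam[OF e(6)] k]]
        l(2) unfolding tgt_def by simp
  qed
  ultimately show ?thesis
    unfolding xy using Lrel_trans bm_bb_lact[OF e(6) k e(5)] by simp
qed

lemma cross_respects: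
  assumes "(a, a') \<in> fib_rel Y B v f" and "wpath Y dag (lam B v) q"
  shows "(cross q v a, cross q v a') \<in> Lrel (tgt X f)"
  using assms(1) unfolding fib_rel_def Lrel_eqc
proof (rule eqc_map)
  show "cross q v a \<in> Ldom (tgt X f)" if "a \<in> fib_dom Y B v f" for a
    using cross_Ldom[OF _ assms(2)] that by (cases a) auto
  show "(cross q v x, cross q v y) \<in> eqc (Ldom (tgt X f)) lhs_gen"
    if "(x, y) \<in> {((e, g \<otimes>\<^bsub>grp Y (lam B v)\<^esub> hm Y (lam B e) k, b), (e, g, lact B e k b)) | e g b k.
        k \<in> carrier (grp Y (lam B e))}" and "x \<in> fib_dom Y B v f" and "y \<in> fib_dom Y B v f" for x y
    using cross_gen_respects[OF assms(2) that(2,3,1)] unfolding Lrel_eqc .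
qed

definition lift_edge :: "'z \<times> ('y,'g) letter list \<times> 'b \<Rightarrow> 'x \<Rightarrow> 'z \<times> ('y,'g) letter list \<times> 'b" where
  "lift_edge T f = (case T of (z, q, b) \<Rightarrow> cross q z (fib_split z f b))"

definition lift_elt :: "'z \<times> ('y,'g) letter list \<times> 'b \<Rightarrow> 'h \<Rightarrow> 'z \<times> ('y,'g) letter list \<times> 'b" where
  "lift_elt T h = (case T of (z, q, b) \<Rightarrow> (z, q, ract B z b h))"

primrec lift :: "'z \<times> ('y,'g) letter list \<times> 'b \<Rightarrow> ('x,'h) letter list \<Rightarrow> 'z \<times> ('y,'g) letter list \<times> 'b" where
  "lift T [] = T"
| "lift T (l # p) = lift (case l of LE f \<Rightarrow> lift_edge T f | LG v h \<Rightarrow> lift_elt T h) p"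

lemma lift_edge_simp: "lift_edge (z, q, b) f = cross q z (fib_split z f b)"
  unfolding lift_edge_def by simp

lemma lift_elt_simp [simp]: "lift_elt (z, q, b) h = (z, q, ract B z b h)"
  unfolding lift_elt_def by simp

lemma lift_append: "lift T (u @ s) = lift (lift T u) s"
  by (induction u arbitrary: T) auto

lemma fib_split_Ldom:
  assumes "(z, q, b) \<in> Ldom x" and "f \<in> gedges X" and "gorg X f = x"
  shows "fib_split z f b \<in> fib_dom Y B z f" and "fib_eval z (fib_split z f b) = b"
  using fib_split assms unfolding Ldom_iff by auto

lemma lift_edge_Ldom:
  assumes "T \<in> Ldom x" and "f \<in> gedges X" and "gorg X f = x"
  shows "lift_edge T f \<in> Ldom (tgt X f)"
proof -
  obtain z q b where T: "T = (z, q, b)" by (cases T)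
  obtain e g c where s: "fib_split z f b = (e, g, c)" by (cases "fib_split z f b")
  have "(e, g, c) \<in> fib_dom Y B z f" using fib_split_Ldom(1)[OF assms[unfolded T]] s by simp
  moreover have "wpath Y dag (lam B z) q" using assms(1) unfolding T Ldom_iff by blast
  ultimately show ?thesis
    using cross_Ldom unfolding T lift_edge_simp s by blast
qed

lemma lift_elt_Ldom:
  assumes "T \<in> Ldom x" and "h \<in> carrier (grp X x)"
  shows "lift_elt T h \<in> Ldom x"
  using assms ract_closed[OF vert_carr] by (cases T) (auto simp: Ldom_iff)

lemma lift_Ldom: "wpath X x w p \<Longrightarrow> T \<in> Ldom x \<Longrightarrow> lift T p \<in> Ldom w"
  by (induction arbitrary: T rule: wpath.induct) (auto simp: lift_edge_Ldom lift_elt_Ldom)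

lemma lift_elt_respects:
  assumes "(T, T') \<in> Lrel x" and "h \<in> carrier (grp X x)"
  shows "(lift_elt T h, lift_elt T' h) \<in> Lrel x"
  using assms(1)
proof (rule Lrel_map)
  show "lift_elt a h \<in> Ldom x" if "a \<in> Ldom x" for a
    using lift_elt_Ldom[OF that assms(2)] .
  fix a a' assume "(a, a') \<in> lhs_gen" "a \<in> Ldom x" "a' \<in> Ldom x"
  then show "(lift_elt a h, lift_elt a' h) \<in> Lrel x"
  proof (cases rule: lhs_genE)
    case (peq z q q' b)
    then show ?thesis
      using \<open>a \<in> Ldom x\<close> assms(2) Lrel_peq ract_closed[OF vert_carr] by (auto simp: Ldom_iff)
  next
    case (LG z q g b)
    with \<open>a \<in> Ldom x\<close> \<open>a' \<in> Ldom x\<close> have z: "z \<in> gverts B" "rho B z = x" "b \<in> bs B z"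
      "wpath Y dag (lam B z) q" by (auto simp: Ldom_iff)
    have h: "h \<in> carrier (grp X (rho B z))" using assms(2) z(2) by simp
    show ?thesis
      using Lrel_LG[OF z(1,2,4) LG(3) ract_closed[OF vert_carr[OF z(1)] h z(3)]]
        lact_ract[OF vert_carr[OF z(1)] LG(3) h z(3)] unfolding LG by simp
  qed
qed

lemma lift_edge_gen_respects:
  assumes "(T, T') \<in> lhs_gen" and "T \<in> Ldom x" and "T' \<in> Ldom x" and f: "f \<in> gedges X" "gorg X f = x"
  shows "(lift_edge T f, lift_edge T' f) \<in> Lrel (tgt X f)"
  using assms(1)
proof (cases rule: lhs_genE)
  case (peq z q q' b)
  obtain e g c where s: "fib_split z f b = (e, g, c)" by (cases "fib_split z f b")
  have a: "(e, g, c) \<in> fib_dom Y B z f" using fib_split_Ldom(1)[OF assms(2)[unfolded peq] f] s by simp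
  note e = fib_domD[OF a]
  have "peq Y dag (lam B (tgt B e)) (q @ [LG (lam B z) g] @ mor Y (lam B e)) (q' @ [LG (lam B z) g] @ mor Y (lam B e))"
    using peq_append[OF gog_Y peq(3) wpath_cross[OF a]] by simp
  then show ?thesis
    using Lrel_peq[OF e(8) _ e(10)] rho_carr(4)[OF e(6)] e(2) unfolding peq lift_edge_simp s by simp
next
  case (LG z q g0 b)
  have z: "z \<in> gverts B" "wpath Y dag (lam B z) q" using assms(3) unfolding LG Ldom_iff by simp_all
  obtain e g c where s: "fib_split z f b = (e, g, c)" by (cases "fib_split z f b")
  have a: "(e, g, c) \<in> fib_dom Y B z f" and b: "lact B z g (bm B e c) = b"
    using fib_split_Ldom[OF assms(2)[unfolded LG] f] s by simp_all
  note e = fib_domD[OF a]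
  let ?g = "g0 \<otimes>\<^bsub>grp Y (lam B z)\<^esub> g"
  have g: "?g \<in> carrier (grp Y (lam B z))"
    using monoid.m_closed[OF group.is_monoid[OF group_lam[OF vert_carr[OF z(1)]]] LG(3) e(4)] .
  have a': "(e, ?g, c) \<in> fib_dom Y B z f" using a g unfolding fib_dom_def by simp
  have "fib_eval z (e, ?g, c) = lact B z g0 b"
    using lact_mult[OF vert_carr[OF z(1)] LG(3) e(4) e(9)] b by simp
  moreover note s' = fib_split_Ldom[OF assms(3)[unfolded LG] f]
  moreover have "gorg X f = rho B z" using f(2) assms(3) unfolding LG Ldom_iff by simp
  ultimately have "((e, ?g, c), fib_split z f (lact B z g0 b)) \<in> fib_rel Y B z f"
    using fib_eval_inj[OF z(1) f(1) _ a'] by simp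
  from cross_respects[OF this z(2)]
  have "(cross q z (e, ?g, c), cross q z (fib_split z f (lact B z g0 b))) \<in> Lrel (tgt X f)" .
  moreover have "(lift_edge T f, cross q z (e, ?g, c)) \<in> Lrel (tgt X f)"
  proof -
    have "peq Y dag (lam B (tgt B e)) (q @ [LG (lam B z) g0, LG (lam B z) g] @ mor Y (lam B e))
        (q @ [LG (lam B z) ?g] @ mor Y (lam B e))"
      using pctx[OF pmult[OF lam_vert[OF z(1)] LG(3) e(4)] z(2)] wpath_mor[OF graph_Y lam_carr(1)[OF e(6)]]
        lam_carr(3,4)[OF e(6)] e(3) by simp
    then show ?thesis
      using Lrel_peq[OF e(8) _ e(10)] rho_carr(4)[OF e(6)] e(2) unfolding LG lift_edge_simp s by simp
  qed
  ultimately show ?thesis using Lrel_trans unfolding LG lift_edge_simp by blast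
qed

lemma lift_edge_respects:
  assumes "(T, T') \<in> Lrel x" and "f \<in> gedges X" and "gorg X f = x"
  shows "(lift_edge T f, lift_edge T' f) \<in> Lrel (tgt X f)"
  using assms(1) by (rule Lrel_map) (use lift_edge_Ldom lift_edge_gen_respects assms(2,3) in blast)+

lemma lift_respects: "wpath X x w p \<Longrightarrow> (T, T') \<in> Lrel x \<Longrightarrow> (lift T p, lift T' p) \<in> Lrel w"
  by (induction arbitrary: T T' rule: wpath.induct) (auto simp: lift_edge_respects lift_elt_respects)

text \<open>The decomposition of (e bar)^-(c bar) along the reverse of \<rho>(e) is (e bar, 1, c bar),
  so crossing back undoes the crossing of e up to the unit letter.\<close>

lemma lift_edge_back:
  assumes "e \<in> gedges B" and "c \<in> bs B e" and "wpath Y dag (lam B (tgt B e)) Q"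
  shows "(lift_edge (tgt B e, Q, bm B (grev B e) (bb B e c)) (grev X (rho B e)),
          (gorg B e, Q @ [LG (lam B (tgt B e)) \<one>\<^bsub>grp Y (lam B (tgt B e))\<^esub>] @ mor Y (lam B (grev B e)), bm B e c))
         \<in> Lrel (gorg X (rho B e))"
proof -
  have ec: "e \<in> carr B" using assms(1) by (rule edge_carr)
  define v where "v = tgt B e"
  define f where "f = grev X (rho B e)"
  define c' where "c' = bm B (grev B e) (bb B e c)"
  note re = graph_edge[OF graph_X rho_edge[OF assms(1)]]
  have f: "f \<in> gedges X" "gorg X f = rho B v" "tgt X f = gorg X (rho B e)"
    using re(1,5) rho_carr(2)[OF ec] rho_carr(3)[OF grev_carr[OF ec]] unfolding f_def v_def tgt_def
    by simp_all
  have v: "v \<in> gverts B" unfolding v_def using graph_edge(4)[OF graph_B assms(1)] .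
  have a: "(grev B e, \<one>\<^bsub>grp Y (lam B v)\<^esub>, bb B e c) \<in> fib_dom Y B v f"
    using graph_edge(1)[OF graph_B assms(1)] bb_closed[OF ec assms(2)] one_lam_closed[OF vert_carr[OF v]]
      rho_carr(2)[OF ec] unfolding fib_dom_def f_def v_def tgt_def by simp
  have c': "c' \<in> bs B v" using fib_domD(9)[OF a] graph_edge(2)[OF graph_B assms(1)]
    unfolding c'_def by simp
  have "fib_eval v (grev B e, \<one>\<^bsub>grp Y (lam B v)\<^esub>, bb B e c) = c'"
    using lact_one[OF vert_carr[OF v] c'] unfolding c'_def by simp
  then have "(fib_split v f c', (grev B e, \<one>\<^bsub>grp Y (lam B v)\<^esub>, bb B e c)) \<in> fib_rel Y B v f"
    using fib_eval_inj[OF v f(1,2) fib_split(1)[OF v f(1,2) c'] a] fib_split(2)[OF v f(1,2) c'] by simp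
  from cross_respects[OF this assms(3)[folded v_def]]
  show ?thesis
    using graph_edge(2,5)[OF graph_B assms(1)] bb_bb[OF ec assms(2)] f(3)
    unfolding lift_edge_simp c'_def v_def f_def by simp
qed

lemma Lrel_mor_cancel:
  assumes "e \<in> gedges B" and "gorg B e = z" and "rho B z = x" and "b \<in> bs B z"
    and "wpath Y dag (lam B z) q"
  shows "((z, q @ mor Y (lam B e) @ [LG (lam B (tgt B e)) \<one>\<^bsub>grp Y (lam B (tgt B e))\<^esub>] @ mor Y (lam B (grev B e)), b),
          (z, q, b)) \<in> Lrel x"
proof -
  have ec: "e \<in> carr B" using assms(1) by (rule edge_carr)
  note l = lam_carr[OF ec]
  have "peq Y dag (gorg Y (lam B e))
      (q @ mor Y (lam B e) @ [LG (tgt Y (lam B e)) \<one>\<^bsub>grp Y (tgt Y (lam B e))\<^esub>] @ mor Y (grev Y (lam B e))) (q @ [])"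
    using peq_prepend[OF gog_Y peq_mor_cancel[OF gog_Y l(1)]] assms(2,5) l(3) by simp
  then show ?thesis
    using Lrel_peq[OF _ assms(3,4)] graph_edge(3)[OF graph_B assms(1)] assms(2) l by simp
qed

lemma lift_edge_rev_edge:
  assumes x: "x \<in> gedges X" and T: "T \<in> Ldom (gorg X x)"
  shows "(lift T [LE x, LE (grev X x)], T) \<in> Lrel (gorg X x)"
proof -
  obtain z q b where Tz: "T = (z, q, b)" by (cases T)
  have z: "z \<in> gverts B" "rho B z = gorg X x" "wpath Y dag (lam B z) q"
    using T unfolding Tz Ldom_iff by simp_all
  obtain e g c where s: "fib_split z x b = (e, g, c)" by (cases "fib_split z x b")
  have a: "(e, g, c) \<in> fib_dom Y B z x" and b: "lact B z g (bm B e c) = b"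
    using fib_split_Ldom[OF T[unfolded Tz] x refl] s by simp_all
  note e = fib_domD[OF a]
  let ?q = "q @ [LG (lam B z) g]"
  have q: "wpath Y dag (lam B z) ?q" using wpath_snoc_LG[OF graph_Y z(3) e(4)] .
  have "(lift T [LE x, LE (grev X x)],
      (z, ?q @ mor Y (lam B e) @ [LG (lam B (tgt B e)) \<one>\<^bsub>grp Y (lam B (tgt B e))\<^esub>] @ mor Y (lam B (grev B e)),
        bm B e c)) \<in> Lrel (gorg X x)"
    using lift_edge_back[OF e(1,5) wpath_append[OF z(3) wpath_cross[OF a]]] e(2,3)
    unfolding Tz by (simp add: lift_edge_simp s)
  moreover have "((z, ?q @ mor Y (lam B e) @ [LG (lam B (tgt B e)) \<one>\<^bsub>grp Y (lam B (tgt B e))\<^esub>] @ mor Y (lam B (grev B e)),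
        bm B e c), (z, ?q, bm B e c)) \<in> Lrel (gorg X x)"
    using Lrel_mor_cancel[OF e(1,3) z(2) e(9) q] .
  moreover have "((z, ?q, bm B e c), T) \<in> Lrel (gorg X x)"
    using Lrel_LG[OF z e(4,9)] b unfolding Tz by simp
  ultimately show ?thesis using Lrel_trans by blast
qed

lemma lift_conj:
  assumes x: "x \<in> gedges X" and h: "h \<in> carrier (grp X x)" and T: "T \<in> Ldom (gorg X x)"
  shows "(lift T [LG (gorg X x) (hm X x h), LE x], lift T [LE x, LG (tgt X x) (hm X (grev X x) (hb X x h))])
     \<in> Lrel (tgt X x)"
proof -
  obtain z q b where Tz: "T = (z, q, b)" by (cases T)
  have z: "z \<in> gverts B" "rho B z = gorg X x" "wpath Y dag (lam B z) q" "b \<in> bs B z"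
    using T unfolding Tz Ldom_iff by simp_all
  obtain e g c where s: "fib_split z x b = (e, g, c)" by (cases "fib_split z x b")
  have a: "(e, g, c) \<in> fib_dom Y B z x" and b: "lact B z g (bm B e c) = b"
    using fib_split_Ldom[OF T[unfolded Tz] x refl] s by simp_all
  note e = fib_domD[OF a]
  have he: "h \<in> carrier (grp X (rho B e))" using h e(2) by simp
  have hz: "hm X x h \<in> carrier (grp X (rho B z))"
    using hom_in_carrier[OF gog_hm[OF gog_X edge_carr[OF x]] h] z(2) by simp
  let ?b = "ract B z b (hm X x h)"
  have Th: "(z, q, ?b) \<in> Ldom (gorg X x)"
    using lift_elt_Ldom[OF T hz[unfolded z(2)]] unfolding Tz by simp
  have a': "(e, g, ract B e c h) \<in> fib_dom Y B z x"
    using a ract_closed[OF e(6) he e(5)] unfolding fib_dom_def by simp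
  have "fib_eval z (e, g, ract B e c h) = lact B z g (ract B z (bm B e c) (hm X x h))"
    using bm_ract[OF e(6) he e(5)] e(2,3) by simp
  also have "\<dots> = ?b" using lact_ract[OF vert_carr[OF z(1)] e(4) hz e(9)] b by simp
  finally have "(fib_split z x ?b, (e, g, ract B e c h)) \<in> fib_rel Y B z x"
    using fib_eval_inj[OF z(1) x z(2)[symmetric] _ a'] fib_split_Ldom[OF Th x refl] by simp
  from cross_respects[OF this z(3)]
  show ?thesis
    using bm_bb_ract[OF e(6) he e(5)] e(2) unfolding Tz by (simp add: lift_edge_simp s)
qed

lemma lift_peq: "peq X a w l r \<Longrightarrow> T \<in> Ldom a \<Longrightarrow> (lift T l, lift T r) \<in> Lrel w"
proof (induction arbitrary: T rule: peq.induct)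
  case (prefl v w p)
  then show ?case using Lrel_refl lift_Ldom by blast
next
  case (psym v w p q)
  then show ?case using Lrel_sym by blast
next
  case (ptrans v w p q r)
  then show ?case using Lrel_trans by blast
next
  case (pctx a b l r v u w s)
  have "(lift (lift T u) l, lift (lift T u) r) \<in> Lrel b"
    using pctx.IH[OF lift_Ldom[OF pctx.hyps(2) pctx.prems]] .
  then show ?case using lift_respects[OF pctx.hyps(3)] by (simp add: lift_append)
next
  case (pmult v g h)
  obtain z q b where Tz: "T = (z, q, b)" by (cases T)
  have z: "z \<in> carr B" "rho B z = v" "b \<in> bs B z"
    using pmult.prems unfolding Tz Ldom_iff by (auto intro: vert_carr)
  have "ract B z (ract B z b g) h = ract B z b (g \<otimes>\<^bsub>grp X v\<^esub> h)"
    using ract_mult[OF z(1) _ _ z(3)] pmult.hyps(2,3) z(2) by simp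
  moreover have "wpath X v v [LG v (g \<otimes>\<^bsub>grp X v\<^esub> h)]"
    using peq_wpath[OF gog_X peq.pmult[OF pmult.hyps]] by simp
  note Lrel_refl[OF lift_Ldom[OF this pmult.prems]]
  ultimately show ?case unfolding Tz by simp
next
  case (pone v)
  obtain z q b where Tz: "T = (z, q, b)" by (cases T)
  have "ract B z b \<one>\<^bsub>grp X v\<^esub> = b"
    using pone.prems ract_one[OF vert_carr] unfolding Tz Ldom_iff by auto
  then show ?case using Lrel_refl[OF pone.prems] unfolding Tz by simp
next
  case (pinv x)
  then show ?case using lift_edge_rev_edge by simp
next
  case (pconj x g)
  then show ?case using lift_conj by blast
qed

section \<open>The fundamental biset\<close>

abbreviation Bdom where "Bdom st \<equiv> bis_dom Y X B dag st"
abbreviation Brel where "Brel st \<equiv> bis_rel Y X B dag st"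

definition bis_gen :: "'x \<Rightarrow> (('z \<times> ('y,'g) letter list \<times> 'b \<times> ('x,'h) letter list) \<times>
    ('z \<times> ('y,'g) letter list \<times> 'b \<times> ('x,'h) letter list)) set" where
  "bis_gen st = {((z, q, b, p), (z, q', b, p)) | z q q' b p. peq Y dag (lam B z) q q'} \<union>
      {((z, q, b, p), (z, q, b, p')) | z q b p p'. peq X (rho B z) st p p'} \<union>
      {((z, q @ [LG (lam B z) g], b, p), (z, q, lact B z g b, p)) | z q g b p.
          g \<in> carrier (grp Y (lam B z))} \<union>
      {((z, q, ract B z b h, p), (z, q, b, LG (rho B z) h # p)) | z q b h p.
          h \<in> carrier (grp X (rho B z))} \<union>
      {((gorg B z, q, bm B z b, p),
        (tgt B z, q @ mor Y (lam B z), bm B (grev B z) (bb B z b), mor X (grev X (rho B z)) @ p))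
         | z q b p. z \<in> gedges B \<and> b \<in> bs B z \<and>
             wpath Y dag (gorg Y (lam B z)) q \<and> wpath X (gorg X (rho B z)) st p}"

lemma Brel_eqc: "Brel st = eqc (Bdom st) (bis_gen st)"
  unfolding bis_rel_def bis_gen_def ..

lemma Bdom_iff: "(z, q, b, p) \<in> Bdom st \<longleftrightarrow>
    z \<in> gverts B \<and> wpath Y dag (lam B z) q \<and> b \<in> bs B z \<and> wpath X (rho B z) st p"
  unfolding bis_dom_def by simp

lemma equiv_Brel: "equiv (Bdom st) (Brel st)"
  unfolding Brel_eqc by (rule equiv_eqc)

lemma Brel_base: "(u, u') \<in> bis_gen st \<Longrightarrow> u \<in> Bdom st \<Longrightarrow> u' \<in> Bdom st \<Longrightarrow> (u, u') \<in> Brel st"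
  unfolding Brel_eqc by (rule eqc_base)

lemma Brel_sym: "(u, u') \<in> Brel st \<Longrightarrow> (u', u) \<in> Brel st"
  unfolding Brel_eqc by (rule eqc_sym)

lemma Brel_trans: "(u, u') \<in> Brel st \<Longrightarrow> (u', u'') \<in> Brel st \<Longrightarrow> (u, u'') \<in> Brel st"
  unfolding Brel_eqc by (rule eqc_trans)

lemma bis_genE:
  assumes "(u, u') \<in> bis_gen st"
  obtains (peqY) z q q' b p where "u = (z, q, b, p)" and "u' = (z, q', b, p)" and "peq Y dag (lam B z) q q'"
  | (peqX) z q b p p' where "u = (z, q, b, p)" and "u' = (z, q, b, p')" and "peq X (rho B z) st p p'"
  | (lact) z q g b p where "u = (z, q @ [LG (lam B z) g], b, p)" and "u' = (z, q, lact B z g b, p)"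
      and "g \<in> carrier (grp Y (lam B z))"
  | (ract) z q b h p where "u = (z, q, ract B z b h, p)" and "u' = (z, q, b, LG (rho B z) h # p)"
      and "h \<in> carrier (grp X (rho B z))"
  | (edge) z q b p where "u = (gorg B z, q, bm B z b, p)"
      and "u' = (tgt B z, q @ mor Y (lam B z), bm B (grev B z) (bb B z b), mor X (grev X (rho B z)) @ p)"
      and "z \<in> gedges B" and "b \<in> bs B z" and "wpath Y dag (gorg Y (lam B z)) q"
      and "wpath X (gorg X (rho B z)) st p"
  using assms unfolding bis_gen_def
  by (elim UnE CollectE exE conjE) (simp_all add: that)

lemma bis_gen_peqY: "peq Y dag (lam B z) q q' \<Longrightarrow> ((z, q, b, p), (z, q', b, p)) \<in> bis_gen st"
  unfolding bis_gen_def by simp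

lemma bis_gen_peqX: "peq X (rho B z) st p p' \<Longrightarrow> ((z, q, b, p), (z, q, b, p')) \<in> bis_gen st"
  unfolding bis_gen_def by simp

lemma bis_gen_lact: "g \<in> carrier (grp Y (lam B z)) \<Longrightarrow>
    ((z, q @ [LG (lam B z) g], b, p), (z, q, lact B z g b, p)) \<in> bis_gen st"
  unfolding bis_gen_def by simp

lemma bis_gen_ract: "h \<in> carrier (grp X (rho B z)) \<Longrightarrow>
    ((z, q, ract B z b h, p), (z, q, b, LG (rho B z) h # p)) \<in> bis_gen st"
  unfolding bis_gen_def by simp

lemma bis_gen_edge:
  assumes "z \<in> gedges B" and "b \<in> bs B z" and "wpath Y dag (gorg Y (lam B z)) q"
    and "wpath X (gorg X (rho B z)) st p"
  shows "((gorg B z, q, bm B z b, p),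
    (tgt B z, q @ mor Y (lam B z), bm B (grev B z) (bb B z b), mor X (grev X (rho B z)) @ p)) \<in> bis_gen st"
  unfolding bis_gen_def using assms by (intro UnI2 CollectI exI[of _ z] exI[of _ q] exI[of _ b] exI[of _ p]) simp

text \<open>The inverse of the natural map: lift the X-path p of q \<otimes> b \<otimes> p, starting at b.\<close>

definition lift_class ::
    "'x \<Rightarrow> 'z \<times> ('y,'g) letter list \<times> 'b \<times> ('x,'h) letter list \<Rightarrow> ('z \<times> ('y,'g) letter list \<times> 'b) set" where
  "lift_class st = (\<lambda>(z, q, b, p). Lrel st `` {lift (z, q, b) p})"

lemma lift_class_simp: "lift_class st (z, q, b, p) = Lrel st `` {lift (z, q, b) p}"
  unfolding lift_class_def by simp

lemma lift_class_gen:
  assumes "(u, u') \<in> bis_gen st" and "u \<in> Bdom st" and "u' \<in> Bdom st"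
  shows "lift_class st u = lift_class st u'"
  using assms(1)
proof (cases rule: bis_genE)
  case (peqY z q q' b p)
  have "z \<in> gverts B" "b \<in> bs B z" "wpath X (rho B z) st p"
    using assms(2) unfolding peqY Bdom_iff by simp_all
  from lift_respects[OF this(3) Lrel_peq[OF this(1) refl this(2) peqY(3)]]
  show ?thesis unfolding peqY lift_class_simp by (rule equiv_class_eq[OF equiv_Lrel])
next
  case (peqX z q b p p')
  have "(z, q, b) \<in> Ldom (rho B z)" using assms(2) unfolding peqX Bdom_iff Ldom_iff by simp
  from lift_peq[OF peqX(3) this]
  show ?thesis unfolding peqX lift_class_simp by (rule equiv_class_eq[OF equiv_Lrel])
next
  case (lact z q g b p)
  have "z \<in> gverts B" "b \<in> bs B z" "wpath X (rho B z) st p" "wpath Y dag (lam B z) q"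
    using assms(2,3) unfolding lact Bdom_iff by simp_all
  from lift_respects[OF this(3) Lrel_LG[OF this(1) refl this(4) lact(3) this(2)]]
  show ?thesis unfolding lact lift_class_simp by (rule equiv_class_eq[OF equiv_Lrel])
next
  case (ract z q b h p)
  then show ?thesis unfolding ract lift_class_simp by simp
next
  case (edge z q b p)
  have zc: "z \<in> carr B" using edge(3) by (rule edge_carr)
  note l = lam_carr[OF zc] and r = rho_carr[OF zc]
  have mX: "mor X (grev X (rho B z)) = [LE (grev X (rho B z))]"
    unfolding mor_def using graph_edge(1)[OF graph_X rho_edge[OF edge(3)]] by simp
  have q: "wpath Y dag (lam B (gorg B z)) q" using edge(5) l(3) by simp
  have "(lift_edge (tgt B z, q @ mor Y (lam B z), bm B (grev B z) (bb B z b)) (grev X (rho B z)),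
      (gorg B z, q @ mor Y (lam B z) @ [LG (lam B (tgt B z)) \<one>\<^bsub>grp Y (lam B (tgt B z))\<^esub>] @ mor Y (lam B (grev B z)),
        bm B z b)) \<in> Lrel (gorg X (rho B z))"
  proof -
    have "wpath Y dag (lam B (tgt B z)) (q @ mor Y (lam B z))"
      using wpath_append[OF edge(5) wpath_mor[OF graph_Y l(1)]] l(4) by simp
    from lift_edge_back[OF edge(3,4) this] show ?thesis by simp
  qed
  moreover have "((gorg B z, q @ mor Y (lam B z) @ [LG (lam B (tgt B z)) \<one>\<^bsub>grp Y (lam B (tgt B z))\<^esub>] @ mor Y (lam B (grev B z)),
        bm B z b), (gorg B z, q, bm B z b)) \<in> Lrel (gorg X (rho B z))"
    using Lrel_mor_cancel[OF edge(3) refl r(3) bm_closed[OF zc edge(4)] q] .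
  ultimately have "(lift_edge (tgt B z, q @ mor Y (lam B z), bm B (grev B z) (bb B z b)) (grev X (rho B z)),
      (gorg B z, q, bm B z b)) \<in> Lrel (gorg X (rho B z))"
    by (rule Lrel_trans)
  from lift_respects[OF edge(6) this]
  show ?thesis unfolding edge lift_class_simp mX
    by (simp add: equiv_class_eq[OF equiv_Lrel] Lrel_sym)
qed

lemma lift_class_respects: "(u, u') \<in> Brel st \<Longrightarrow> lift_class st u = lift_class st u'"
  unfolding Brel_eqc by (erule eqc_invariant) (rule lift_class_gen)

definition with_path :: "'z \<times> ('y,'g) letter list \<times> 'b \<Rightarrow> ('x,'h) letter list \<Rightarrow>
    'z \<times> ('y,'g) letter list \<times> 'b \<times> ('x,'h) letter list" where
  "with_path = (\<lambda>(z, q, b) p. (z, q, b, p))"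

lemma with_path_simp [simp]: "with_path (z, q, b) p = (z, q, b, p)"
  unfolding with_path_def by simp

lemma with_path_Bdom: "T \<in> Ldom x \<Longrightarrow> wpath X x st p \<Longrightarrow> with_path T p \<in> Bdom st"
  by (cases T) (simp add: Ldom_iff Bdom_iff)

lemma Brel_lift_edge:
  assumes f: "f \<in> gedges X" and T: "T \<in> Ldom (gorg X f)" and p: "wpath X (tgt X f) w p"
  shows "(with_path T (LE f # p), with_path (lift_edge T f) p) \<in> Brel w"
proof -
  obtain z q b where Tz: "T = (z, q, b)" by (cases T)
  have z: "z \<in> gverts B" "rho B z = gorg X f" "wpath Y dag (lam B z) q" "b \<in> bs B z"
    using T unfolding Tz Ldom_iff by simp_all
  obtain e g c where s: "fib_split z f b = (e, g, c)" by (cases "fib_split z f b")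
  have a: "(e, g, c) \<in> fib_dom Y B z f" and b: "lact B z g (bm B e c) = b"
    using fib_split_Ldom[OF T[unfolded Tz] f refl] s by simp_all
  note e = fib_domD[OF a] and l = lam_carr[OF e(6)] and r = rho_carr[OF e(6)]
  have fp: "wpath X (gorg X f) w (LE f # p)" using wedge[OF f p] .
  have q: "wpath Y dag (lam B z) (q @ [LG (lam B z) g])" using wpath_snoc_LG[OF graph_Y z(3) e(4)] .
  define Q where "Q = q @ [LG (lam B z) g] @ mor Y (lam B e)"
  define c' where "c' = bm B (grev B e) (bb B e c)"
  have Q: "wpath Y dag (lam B (tgt B e)) Q"
    unfolding Q_def using wpath_append[OF z(3) wpath_cross[OF a]] .
  have rt: "rho B (tgt B e) = tgt X f" using r(4) e(2) by simp
  have ff: "mor X (grev X (rho B e)) @ LE f # p = [LE (grev X f), LE f] @ p"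
    unfolding mor_def using graph_edge(1)[OF graph_X f] e(2) by simp
  have ffp: "wpath X (tgt X f) w ([LE (grev X f), LE f] @ p)"
    using wpath_append[OF wpath_edge_back_forth[OF graph_X f] p] .
  let ?u0 = "(z, q, b, LE f # p)" and ?u1 = "(z, q @ [LG (lam B z) g], bm B e c, LE f # p)"
    and ?u2 = "(tgt B e, Q, c', [LE (grev X f), LE f] @ p)" and ?u3 = "(tgt B e, Q, c', p)"
  have dom: "?u0 \<in> Bdom w" "?u1 \<in> Bdom w" "?u2 \<in> Bdom w" "?u3 \<in> Bdom w"
    using z fp q e(8,9) Q e(10)[folded c'_def] rt ffp p unfolding Bdom_iff by simp_all
  have "(?u1, ?u0) \<in> bis_gen w"
    using bis_gen_lact[OF e(4), of q "bm B e c" "LE f # p" w] b by simp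
  moreover have "(?u1, ?u2) \<in> bis_gen w"
  proof -
    have "wpath Y dag (gorg Y (lam B e)) (q @ [LG (lam B z) g])" using q l(3) e(3) by simp
    moreover have "wpath X (gorg X (rho B e)) w (LE f # p)" using fp e(2) by simp
    ultimately have "((gorg B e, q @ [LG (lam B z) g], bm B e c, LE f # p),
        (tgt B e, (q @ [LG (lam B z) g]) @ mor Y (lam B e), c', mor X (grev X (rho B e)) @ LE f # p))
        \<in> bis_gen w"
      unfolding c'_def by (rule bis_gen_edge[OF e(1,5)])
    then show ?thesis unfolding Q_def ff using e(3) by simp
  qed
  moreover have "(?u2, ?u3) \<in> bis_gen w"
  proof -
    have "peq X (tgt X f) (tgt X f) [LE (grev X f), LE f] []"
      using pinv[OF graph_edge(1)[OF graph_X f]] graph_edge(2)[OF graph_X f] unfolding tgt_def by simp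
    from peq_append[OF gog_X this p] show ?thesis using bis_gen_peqX rt by simp
  qed
  ultimately have "(?u0, ?u3) \<in> Brel w"
    using Brel_trans[OF Brel_trans[OF Brel_sym Brel_base]] Brel_base dom by metis
  then show ?thesis unfolding Tz by (simp add: lift_edge_simp s Q_def c'_def)
qed

lemma Brel_lift: "wpath X x st p \<Longrightarrow> T \<in> Ldom x \<Longrightarrow> (with_path T p, with_path (lift T p) []) \<in> Brel st"
proof (induction arbitrary: T rule: wpath.induct)
  case (wnil v)
  then show ?case using with_path_Bdom[OF wnil.prems wpath.wnil[OF wnil.hyps]]
    unfolding Brel_eqc by (simp add: eqc_refl)
next
  case (wedge f w p)
  have "(with_path T (LE f # p), with_path (lift_edge T f) p) \<in> Brel w"
    using Brel_lift_edge[OF wedge.hyps(1) wedge.prems wedge.hyps(2)] .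
  moreover have "(with_path (lift_edge T f) p, with_path (lift (lift_edge T f) p) []) \<in> Brel w"
    using wedge.IH[OF lift_edge_Ldom[OF wedge.prems wedge.hyps(1) refl]] .
  ultimately show ?case by (simp add: Brel_trans)
next
  case (welt v h w p)
  obtain z q b where Tz: "T = (z, q, b)" by (cases T)
  have z: "z \<in> gverts B" "rho B z = v" "wpath Y dag (lam B z) q" "b \<in> bs B z"
    using welt.prems unfolding Tz Ldom_iff by simp_all
  have "((z, q, ract B z b h, p), (z, q, b, LG v h # p)) \<in> Brel w"
  proof (rule Brel_base)
    show "((z, q, ract B z b h, p), (z, q, b, LG v h # p)) \<in> bis_gen w"
      using bis_gen_ract[of h z q b p w] welt.hyps(2) z(2) by simp
    show "(z, q, ract B z b h, p) \<in> Bdom w" "(z, q, b, LG v h # p) \<in> Bdom w"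
      using z ract_closed[OF vert_carr[OF z(1)]] welt.hyps wpath.welt unfolding Bdom_iff by simp_all
  qed
  then show ?case
    using Brel_trans[OF Brel_sym welt.IH[OF lift_elt_Ldom[OF welt.prems welt.hyps(2)]]] unfolding Tz by simp
qed

lemma with_path_respects:
  assumes "(T, T') \<in> Lrel st" and "st \<in> gverts X"
  shows "(with_path T [], with_path T' []) \<in> Brel st"
  using assms(1) unfolding Lrel_eqc Brel_eqc
proof (rule eqc_map)
  show "with_path T [] \<in> Bdom st" if "T \<in> Ldom st" for T
    using with_path_Bdom[OF that wnil[OF assms(2)]] .
  fix a a' assume "(a, a') \<in> lhs_gen" "a \<in> Ldom st" "a' \<in> Ldom st"
  moreover from this(1) have "(with_path a [], with_path a' []) \<in> bis_gen st"
    by (cases rule: lhs_genE) (simp_all add: bis_gen_peqY bis_gen_lact)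
  ultimately show "(with_path a [], with_path a' []) \<in> eqc (Bdom st) (bis_gen st)"
    using with_path_Bdom wnil[OF assms(2)] by (blast intro: eqc_base)
qed

definition prepend_lhs :: "('y,'g) letter list \<Rightarrow> 'z \<times> ('y,'g) letter list \<times> 'b \<Rightarrow> 'z \<times> ('y,'g) letter list \<times> 'b" where
  "prepend_lhs r = (\<lambda>(z, q, b). (z, r @ q, b))"

definition prepend_bis :: "('y,'g) letter list \<Rightarrow> 'z \<times> ('y,'g) letter list \<times> 'b \<times> ('x,'h) letter list \<Rightarrow>
    'z \<times> ('y,'g) letter list \<times> 'b \<times> ('x,'h) letter list" where
  "prepend_bis r = (\<lambda>(z, q, b, p). (z, r @ q, b, p))"

lemma prepend_lhs_simp [simp]: "prepend_lhs r (z, q, b) = (z, r @ q, b)"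
  unfolding prepend_lhs_def by simp

lemma prepend_bis_simp [simp]: "prepend_bis r (z, q, b, p) = (z, r @ q, b, p)"
  unfolding prepend_bis_def by simp

lemma prepend_lhs_Ldom: "wpath Y dag dag r \<Longrightarrow> T \<in> Ldom x \<Longrightarrow> prepend_lhs r T \<in> Ldom x"
  by (cases T) (auto simp: Ldom_iff intro: wpath_append)

lemma prepend_bis_Bdom: "wpath Y dag dag r \<Longrightarrow> u \<in> Bdom st \<Longrightarrow> prepend_bis r u \<in> Bdom st"
  by (cases u) (auto simp: Bdom_iff intro: wpath_append)

lemma prepend_lhs_respects:
  assumes "(T, T') \<in> Lrel x" and r: "wpath Y dag dag r"
  shows "(prepend_lhs r T, prepend_lhs r T') \<in> Lrel x"
  using assms(1)
proof (rule Lrel_map)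
  show "prepend_lhs r a \<in> Ldom x" if "a \<in> Ldom x" for a
    using prepend_lhs_Ldom[OF r that] .
  fix a a' assume "(a, a') \<in> lhs_gen" and a: "a \<in> Ldom x" "a' \<in> Ldom x"
  then show "(prepend_lhs r a, prepend_lhs r a') \<in> Lrel x"
  proof (cases rule: lhs_genE)
    case (peq z q q' b)
    have "z \<in> gverts B" "rho B z = x" "b \<in> bs B z" using a(1) unfolding peq Ldom_iff by simp_all
    from Lrel_peq[OF this peq_prepend[OF gog_Y peq(3) r]] show ?thesis unfolding peq by simp
  next
    case (LG z q g b)
    have "z \<in> gverts B" "rho B z = x" "wpath Y dag (lam B z) (r @ q)" "b \<in> bs B z"
      using a wpath_append[OF r] unfolding LG Ldom_iff by simp_all
    from Lrel_LG[OF this(1-3) LG(3) this(4)] show ?thesis unfolding LG by simp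
  qed
qed

lemma prepend_bis_respects:
  assumes "(u, u') \<in> Brel st" and r: "wpath Y dag dag r"
  shows "(prepend_bis r u, prepend_bis r u') \<in> Brel st"
  using assms(1) unfolding Brel_eqc
proof (rule eqc_map)
  show "prepend_bis r a \<in> Bdom st" if "a \<in> Bdom st" for a
    using prepend_bis_Bdom[OF r that] .
  fix a a' assume "(a, a') \<in> bis_gen st" "a \<in> Bdom st" "a' \<in> Bdom st"
  moreover from this(1) have "(prepend_bis r a, prepend_bis r a') \<in> bis_gen st"
  proof (cases rule: bis_genE)
    case (peqY z q q' b p)
    then show ?thesis using bis_gen_peqY peq_prepend[OF gog_Y peqY(3) r] by simp
  next
    case (peqX z q b p p')
    then show ?thesis using bis_gen_peqX by simp
  next
    case (lact z q g b p)
    then show ?thesis using bis_gen_lact[of g z "r @ q"] by simp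
  next
    case (ract z q b h p)
    then show ?thesis using bis_gen_ract by simp
  next
    case (edge z q b p)
    then show ?thesis using bis_gen_edge[OF edge(3,4) wpath_append[OF r edge(5)] edge(6)] by simp
  qed
  ultimately show "(prepend_bis r a, prepend_bis r a') \<in> eqc (Bdom st) (bis_gen st)"
    using prepend_bis_Bdom[OF r] by (blast intro: eqc_base)
qed

lemma trans_Lrel: "trans (Lrel x)"
  using equiv_Lrel unfolding equiv_def by blast

lemma trans_Brel: "trans (Brel st)"
  using equiv_Brel unfolding equiv_def by blast

lemma natmap_class:
  assumes "st \<in> gverts X" and "T \<in> Ldom st"
  shows "natmap Y X B dag st (Lrel st `` {T}) = Brel st `` {with_path T []}"
proof -
  have "(\<lambda>(z, q, b). (z, q, b, [])) = (\<lambda>T. with_path T [])" by auto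
  then show ?thesis unfolding natmap_def
    using Image_image_equiv_class[OF equiv_Lrel trans_Brel assms(2) with_path_respects[OF _ assms(1)]]
    by simp
qed

lemma lhs_act_class:
  assumes "wpath Y dag dag r" and "T \<in> Ldom st"
  shows "lhs_act Y X B dag st r (Lrel st `` {T}) = Lrel st `` {prepend_lhs r T}"
  unfolding lhs_act_def prepend_lhs_def[symmetric]
  using Image_image_equiv_class[OF equiv_Lrel trans_Lrel assms(2) prepend_lhs_respects[OF _ assms(1)]] .

lemma bis_act_class:
  assumes "wpath Y dag dag r" and "u \<in> Bdom st"
  shows "bis_act Y X B dag st r (Brel st `` {u}) = Brel st `` {prepend_bis r u}"
  unfolding bis_act_def prepend_bis_def[symmetric]
  using Image_image_equiv_class[OF equiv_Brel trans_Brel assms(2) prepend_bis_respects[OF _ assms(1)]] .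

lemma natmap_inj:
  assumes "st \<in> gverts X"
  shows "inj_on (natmap Y X B dag st) (lhs_set Y X B dag st)"
proof (rule inj_onI)
  fix C C' assume "C \<in> lhs_set Y X B dag st" "C' \<in> lhs_set Y X B dag st"
    and eq: "natmap Y X B dag st C = natmap Y X B dag st C'"
  then obtain T T' where T: "C = Lrel st `` {T}" "T \<in> Ldom st" and T': "C' = Lrel st `` {T'}" "T' \<in> Ldom st"
    unfolding lhs_set_def by (meson quotientE)
  have "(with_path T [], with_path T' []) \<in> Brel st"
    using eq natmap_class[OF assms] T T' eq_equiv_class_iff[OF equiv_Brel]
      with_path_Bdom[OF _ wnil[OF assms]] by simp
  then have "lift_class st (with_path T []) = lift_class st (with_path T' [])"
    by (rule lift_class_respects)
  then show "C = C'" using T(1) T'(1) by (cases T, cases T') (simp add: lift_class_simp)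
qed

lemma natmap_image:
  assumes "st \<in> gverts X"
  shows "natmap Y X B dag st ` lhs_set Y X B dag st = pi1B Y X B dag st"
proof
  show "natmap Y X B dag st ` lhs_set Y X B dag st \<subseteq> pi1B Y X B dag st"
  proof
    fix D assume "D \<in> natmap Y X B dag st ` lhs_set Y X B dag st"
    then obtain T where "T \<in> Ldom st" and "D = natmap Y X B dag st (Lrel st `` {T})"
      unfolding lhs_set_def by (auto elim!: quotientE)
    then show "D \<in> pi1B Y X B dag st"
      using natmap_class[OF assms] quotientI[OF with_path_Bdom[OF _ wnil[OF assms]]]
      unfolding pi1B_def by simp
  qed
next
  show "pi1B Y X B dag st \<subseteq> natmap Y X B dag st ` lhs_set Y X B dag st"
  proof
    fix D assume "D \<in> pi1B Y X B dag st"
    then obtain z q b p where D: "D = Brel st `` {(z, q, b, p)}" and u: "(z, q, b, p) \<in> Bdom st"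
      unfolding pi1B_def by (metis quotientE prod_cases4)
    have T: "(z, q, b) \<in> Ldom (rho B z)" "wpath X (rho B z) st p"
      using u unfolding Bdom_iff Ldom_iff by simp_all
    have "D = Brel st `` {with_path (lift (z, q, b) p) []}"
      using D equiv_class_eq[OF equiv_Brel Brel_lift[OF T(2,1)]] by simp
    also have "\<dots> = natmap Y X B dag st (Lrel st `` {lift (z, q, b) p})"
      using natmap_class[OF assms lift_Ldom[OF T(2,1)]] by simp
    finally show "D \<in> natmap Y X B dag st ` lhs_set Y X B dag st"
      unfolding lhs_set_def using quotientI[OF lift_Ldom[OF T(2,1)]] by blast
  qed
qed

lemma natmap_equivariant:
  assumes "st \<in> gverts X" and "wpath Y dag dag r" and "C \<in> lhs_set Y X B dag st"
  shows "natmap Y X B dag st (lhs_act Y X B dag st r C) = bis_act Y X B dag st r (natmap Y X B dag st C)"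
proof -
  from assms(3) obtain T where C: "C = Lrel st `` {T}" and T: "T \<in> Ldom st"
    unfolding lhs_set_def by (rule quotientE)
  have "with_path (prepend_lhs r T) [] = prepend_bis r (with_path T [])" by (cases T) simp
  then show ?thesis
    using lhs_act_class[OF assms(2) T] natmap_class[OF assms(1) prepend_lhs_Ldom[OF assms(2) T]]
      bis_act_class[OF assms(2) with_path_Bdom[OF T wnil[OF assms(1)]]] natmap_class[OF assms(1) T]
    unfolding C by simp
qed

end

theorem mainTheorem2:
  fixes Y :: "('y,'g) gog" and X :: "('x,'h) gog" and B :: "('z,'y,'x,'g,'h,'b) gobs"
    and dag :: 'y and st :: 'x
  assumes "is_gog Y" and "is_gog X" and "is_gobs Y X B" and "left_fibrant Y X B"
    and "dag \<in> gverts Y" and "st \<in> gverts X"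
  shows "bij_betw (natmap Y X B dag st) (lhs_set Y X B dag st) (pi1B Y X B dag st) \<and>
         (\<forall>r. wpath Y dag dag r \<longrightarrow> (\<forall>C\<in>lhs_set Y X B dag st.
            natmap Y X B dag st (lhs_act Y X B dag st r C) = bis_act Y X B dag st r (natmap Y X B dag st C)))"
proof -
  interpret lifting Y X B dag
    using assms(1-4) by unfold_locales
  show ?thesis
    using natmap_inj[OF assms(6)] natmap_image[OF assms(6)] natmap_equivariant[OF assms(6)]
    unfolding bij_betw_def by blast
qed

end
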